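(* Let $k\ge1$ and $A,B\in SL(k,\mathbb Z)$, and assume that $1$ is an eigenvalue neither of $A$ nor of $B$. If $\pi_1(\mathcal T_A)\cong\pi_1(\mathcal T_B)$ and $A$ is diagonalizable (over $\mathbb C$), then $B$ is also diagonalizable.
   Context: For $A\in SL(k,\mathbb Z)$, let $\phi_A:\mathbb T^k\to\mathbb T^k$ be the homeomorphism of $\mathbb T^k=\mathbb R^k/\mathbb Z^k$ induced by $A$, and let $\mathcal T_A$ be the mapping torus of $\phi_A$, i.e. $\mathbb T^k\times[0,1]/((x,1)\sim(\phi_A(x),0))$. *)

theory Defs
  imports "HOL-Analysis.Analysis" "HOL-Algebra.Group"
begin

definition quotient_topology :: "'a topology \<Rightarrow> ('a \<Rightarrow> 'b) \<Rightarrow> 'b topology" where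
  "quotient_topology X f =
     topology (\<lambda>U. U \<subseteq> f ` topspace X \<and> openin X {x \<in> topspace X. f x \<in> U})"

definition loops_at :: "'a topology \<Rightarrow> 'a \<Rightarrow> (real \<Rightarrow> 'a) set" where
  "loops_at X x0 = {p. pathin X p \<and> p 0 = x0 \<and> p 1 = x0}"

definition loop_homotopic :: "'a topology \<Rightarrow> 'a \<Rightarrow> (real \<Rightarrow> 'a) \<Rightarrow> (real \<Rightarrow> 'a) \<Rightarrow> bool" where
  "loop_homotopic X x0 p q \<longleftrightarrow>
     homotopic_with (\<lambda>h. h 0 = x0 \<and> h 1 = x0) (top_of_set {0..1}) X p q"

definition loop_class :: "'a topology \<Rightarrow> 'a \<Rightarrow> (real \<Rightarrow> 'a) \<Rightarrow> (real \<Rightarrow> 'a) set" where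
  "loop_class X x0 p = {q \<in> loops_at X x0. loop_homotopic X x0 p q}"

text \<open>Concatenation of paths (same formula as the library's joinpaths, for arbitrary types).\<close>
definition path_join :: "(real \<Rightarrow> 'a) \<Rightarrow> (real \<Rightarrow> 'a) \<Rightarrow> real \<Rightarrow> 'a" where
  "path_join p q = (\<lambda>t. if t \<le> 1/2 then p (2 * t) else q (2 * t - 1))"

definition fundamental_group :: "'a topology \<Rightarrow> 'a \<Rightarrow> ((real \<Rightarrow> 'a) set) monoid" where
  "fundamental_group X x0 =
     \<lparr> carrier = loop_class X x0 ` loops_at X x0,
       mult = (\<lambda>C D. loop_class X x0 (path_join (SOME p. p \<in> C) (SOME q. q \<in> D))),
       one = loop_class X x0 (\<lambda>t. x0) \<rparr>"

definition int_lattice :: "(real^'n) set" where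
  "int_lattice = {v. \<forall>i. v $ i \<in> \<int>}"

definition real_mat :: "int^'n^'n \<Rightarrow> real^'n^'n" where
  "real_mat A = (\<chi> i j. real_of_int (A $ i $ j))"

definition complex_mat :: "int^'n^'n \<Rightarrow> complex^'n^'n" where
  "complex_mat A = (\<chi> i j. complex_of_int (A $ i $ j))"

text \<open>The identification on \<open>\<real>^k \<times> [0,1]\<close>: points of \<open>\<real>^k\<close> are identified
  modulo \<open>\<int>^k\<close> (giving \<open>\<T>^k \<times> [0,1]\<close>), and \<open>(x,1) \<sim> (\<phi>_A(x),0)\<close>.\<close>
definition mt_rel :: "int^'n^'n \<Rightarrow> ((real^'n) \<times> real) \<Rightarrow> ((real^'n) \<times> real) \<Rightarrow> bool" where
  "mt_rel A p q \<longleftrightarrow>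
     (snd p = snd q \<and> fst p - fst q \<in> int_lattice) \<or>
     (snd p = 1 \<and> snd q = 0 \<and> real_mat A *v fst p - fst q \<in> int_lattice) \<or>
     (snd p = 0 \<and> snd q = 1 \<and> fst p - real_mat A *v fst q \<in> int_lattice)"

definition mt_base :: "((real^'n) \<times> real) topology" where
  "mt_base = prod_topology euclidean (top_of_set {0..1})"

definition mt_class :: "int^'n^'n \<Rightarrow> ((real^'n) \<times> real) \<Rightarrow> ((real^'n) \<times> real) set" where
  "mt_class A p = {q \<in> topspace mt_base. mt_rel A p q}"

definition mapping_torus :: "int^'n^'n \<Rightarrow> (((real^'n) \<times> real) set) topology" where
  "mapping_torus A = quotient_topology mt_base (mt_class A)"

text \<open>The fundamental group of the mapping torus, based at the image of \<open>(0,0)\<close>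
  (the mapping torus is path connected, so the base point is immaterial).\<close>
definition pi1_mapping_torus :: "int^'n^'n \<Rightarrow> ((real \<Rightarrow> ((real^'n) \<times> real) set) set) monoid" where
  "pi1_mapping_torus A = fundamental_group (mapping_torus A) (mt_class A (0, 0))"

definition SL_int :: "int^'n^'n \<Rightarrow> bool" where
  "SL_int A \<longleftrightarrow> det A = 1"

definition has_eigenvalue_one :: "int^'n^'n \<Rightarrow> bool" where
  "has_eigenvalue_one A \<longleftrightarrow> (\<exists>v. v \<noteq> 0 \<and> complex_mat A *v v = v)"

definition diagonalizable_over_C :: "int^'n^'n \<Rightarrow> bool" where
  "diagonalizable_over_C A \<longleftrightarrow>
     (\<exists>P D :: complex^'n^'n. invertible P \<and> (\<forall>i j. i \<noteq> j \<longrightarrow> D $ i $ j = 0) \<and>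
        complex_mat A = P ** D ** matrix_inv P)"

end

theory Submission
  imports Defs
begin

text \<open>The universal cover of the mapping torus \<open>T\<^sub>A\<close> is \<open>\<real>^k \<times> \<real>\<close>, with deck group
  \<open>\<int>^k \<rtimes>\<^sub>A \<int>\<close> acting by \<open>(v, m) \<cdot> (x, s) = (A^-m x + v, s + m)\<close>; the endpoint of the lift
  of a loop identifies \<open>\<pi>\<^sub>1(T\<^sub>A)\<close> with this group. If \<open>1\<close> is not an eigenvalue of \<open>A\<close>, every
  homomorphism \<open>\<int>^k \<rtimes>\<^sub>A \<int> \<rightarrow> \<int>\<close> vanishes on \<open>\<int>^k\<close>, because it vanishes on the subgroup
  \<open>(A - 1) \<int>^k\<close> of finite index. Hence an isomorphism \<open>\<int>^k \<rtimes>\<^sub>A \<int> \<cong> \<int>^k \<rtimes>\<^sub>B \<int>\<close> restricts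
  to an automorphism \<open>P\<close> of \<open>\<int>^k\<close> and maps the generator \<open>t\<close> of \<open>\<int>\<close> to an element of height
  \<open>\<epsilon> = \<plusminus>1\<close>; applied to \<open>(v, 0) t = t (A v, 0)\<close> it yields \<open>B^\<epsilon> P = P A\<close>. Diagonalizability
  over \<open>\<complex>\<close> is invariant under conjugation and inversion.\<close>


lemma openin_quotient_topology:
  "openin (quotient_topology X f) U \<longleftrightarrow> U \<subseteq> f ` topspace X \<and> openin X {x \<in> topspace X. f x \<in> U}"
proof -
  have "istopology (\<lambda>U. U \<subseteq> f ` topspace X \<and> openin X {x \<in> topspace X. f x \<in> U})"
    unfolding istopology_def
  proof (rule conjI; intro allI impI ballI)
    fix S T assume S: "S \<subseteq> f ` topspace X \<and> openin X {x \<in> topspace X. f x \<in> S}"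
      and T: "T \<subseteq> f ` topspace X \<and> openin X {x \<in> topspace X. f x \<in> T}"
    have "{x \<in> topspace X. f x \<in> S \<inter> T} =
        {x \<in> topspace X. f x \<in> S} \<inter> {x \<in> topspace X. f x \<in> T}" by auto
    then show "S \<inter> T \<subseteq> f ` topspace X \<and> openin X {x \<in> topspace X. f x \<in> S \<inter> T}"
      using S T openin_Int[of X] by (simp add: le_infI1)
  next
    fix K assume K: "\<forall>S\<in>K. S \<subseteq> f ` topspace X \<and> openin X {x \<in> topspace X. f x \<in> S}"
    have "{x \<in> topspace X. f x \<in> \<Union>K} = (\<Union>S\<in>K. {x \<in> topspace X. f x \<in> S})" by auto
    then show "\<Union>K \<subseteq> f ` topspace X \<and> openin X {x \<in> topspace X. f x \<in> \<Union>K}"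
      using K by auto
  qed
  then show ?thesis
    unfolding quotient_topology_def by (simp add: topology_inverse')
qed

lemma topspace_quotient_topology: "topspace (quotient_topology X f) = f ` topspace X"
proof (rule subset_antisym)
  show "topspace (quotient_topology X f) \<subseteq> f ` topspace X"
    using openin_topspace[of "quotient_topology X f"] unfolding openin_quotient_topology by blast
  have "{x \<in> topspace X. f x \<in> f ` topspace X} = topspace X" by blast
  then show "f ` topspace X \<subseteq> topspace (quotient_topology X f)"
    by (intro openin_subset) (simp add: openin_quotient_topology)
qed


lemma int_lattice_iff: "v \<in> int_lattice \<longleftrightarrow> (\<forall>i. v $ i \<in> \<int>)"
  by (simp add: int_lattice_def)

lemma zero_in_int_lattice [simp]: "0 \<in> int_lattice"
  by (simp add: int_lattice_iff)

lemma axis_in_int_lattice [simp]: "axis i 1 \<in> int_lattice"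
  by (simp add: int_lattice_iff axis_def)

lemma int_lattice_add [intro]: "v \<in> int_lattice \<Longrightarrow> w \<in> int_lattice \<Longrightarrow> v + w \<in> int_lattice"
  by (simp add: int_lattice_iff)

lemma int_lattice_diff [intro]: "v \<in> int_lattice \<Longrightarrow> w \<in> int_lattice \<Longrightarrow> v - w \<in> int_lattice"
  by (simp add: int_lattice_iff)

lemma int_lattice_minus [intro]: "v \<in> int_lattice \<Longrightarrow> - v \<in> int_lattice"
  by (simp add: int_lattice_iff)

lemma int_lattice_scale [intro]: "c \<in> \<int> \<Longrightarrow> v \<in> int_lattice \<Longrightarrow> c *s v \<in> int_lattice"
  by (simp add: int_lattice_iff)

lemma int_lattice_sum [intro]: "(\<And>j. f j \<in> int_lattice) \<Longrightarrow> sum f S \<in> int_lattice"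
  by (induction S rule: infinite_finite_induct) auto

lemma int_lattice_norm_less_1: "w \<in> int_lattice \<Longrightarrow> norm w < 1 \<Longrightarrow> w = 0"
  by (metis Ints_nonzero_abs_less1 component_le_norm_cart int_lattice_iff le_less_trans
      vec_eq_iff zero_index)

lemma int_lattice_diff_shift:
  assumes "a - b \<in> int_lattice"
  shows "a - c \<in> int_lattice \<longleftrightarrow> b - c \<in> int_lattice"
proof
  assume "a - c \<in> int_lattice"
  then have "(a - c) - (a - b) \<in> int_lattice" using assms by blast
  then show "b - c \<in> int_lattice" by simp
next
  assume "b - c \<in> int_lattice"
  then have "(a - b) + (b - c) \<in> int_lattice" using assms by blast
  then show "a - c \<in> int_lattice" by simp
qed

definition integral_mat :: "real^'n^'m \<Rightarrow> bool" where
  "integral_mat M \<longleftrightarrow> (\<forall>i j. M $ i $ j \<in> \<int>)"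

lemma integral_mat_real_mat: "integral_mat (real_mat A)"
  by (simp add: integral_mat_def real_mat_def)

lemma integral_mat_one: "integral_mat (mat 1)"
  by (simp add: integral_mat_def mat_def)

lemma integral_mat_mult: "integral_mat M \<Longrightarrow> integral_mat N \<Longrightarrow> integral_mat (M ** N)"
  unfolding integral_mat_def matrix_matrix_mult_def by (auto intro!: Ints_sum Ints_mult)

lemma integral_mat_diff: "integral_mat M \<Longrightarrow> integral_mat N \<Longrightarrow> integral_mat (M - N)"
  by (simp add: integral_mat_def Ints_diff)

lemma int_lattice_mat_mult [intro]: "integral_mat M \<Longrightarrow> v \<in> int_lattice \<Longrightarrow> M *v v \<in> int_lattice"
  unfolding integral_mat_def int_lattice_iff matrix_vector_mult_def
  by (auto intro!: Ints_sum Ints_mult)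

lemma det_integral_mat: "integral_mat M \<Longrightarrow> det M \<in> \<int>"
  unfolding det_def integral_mat_def by (intro Ints_sum Ints_mult Ints_prod) auto

lemma det_real_mat: "det (real_mat A) = real_of_int (det A)"
  unfolding det_def real_mat_def by (simp add: of_int_sum of_int_prod)

lemma matrix_vector_mult_uminus_right: "(M :: real^'n^'m) *v (- x) = - (M *v x)"
  by (metis diff_0 matrix_vector_mult_0_right matrix_vector_mult_diff_distrib)

lemma matrix_inv_right: "invertible M \<Longrightarrow> M ** matrix_inv M = mat 1"
  unfolding invertible_def matrix_inv_def by (rule someI2_ex) auto

lemma matrix_inv_left: "invertible M \<Longrightarrow> matrix_inv M ** M = mat 1"
  unfolding invertible_def matrix_inv_def by (rule someI2_ex) auto

lemma matrix_inv_eqI: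
  fixes M N :: "'a::field^'n^'n"
  assumes "M ** N = mat 1"
  shows "matrix_inv M = N"
proof -
  have inv: "invertible M"
    using assms invertible_right_inverse by blast
  have "matrix_inv M = matrix_inv M ** (M ** N)" by (simp add: assms)
  also have "\<dots> = N" by (simp add: matrix_mul_assoc matrix_inv_left[OF inv])
  finally show ?thesis .
qed

lemma invertible_matrix_inv: "invertible M \<Longrightarrow> invertible (matrix_inv M)"
  using matrix_inv_left matrix_inv_right invertible_def by blast

lemma int_lattice_det_scale_in_image:
  fixes M :: "real^'n^'n"
  assumes M: "integral_mat M" and v: "v \<in> int_lattice"
  shows "\<exists>u\<in>int_lattice. M *v u = det M *s v"
proof (cases "det M = 0")
  case True
  then show ?thesis by (intro bexI[of _ 0]) auto
next
  case False
  then have inv: "invertible M" by (simp add: invertible_det_nz)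
  define x where "x = matrix_inv M *v v"
  have Mx: "M *v x = v"
    by (simp add: x_def matrix_vector_mul_assoc matrix_inv_right[OF inv])
  have "x $ k * det M \<in> \<int>" for k
  proof -
    have "integral_mat (\<chi> i j. if j = k then (M *v x) $ i else M $ i $ j)"
      using M v by (simp add: Mx integral_mat_def int_lattice_iff)
    then have "det (\<chi> i j. if j = k then (M *v x) $ i else M $ i $ j) \<in> \<int>"
      by (rule det_integral_mat)
    then show ?thesis by (simp only: cramer_lemma)
  qed
  then have "det M *s x \<in> int_lattice"
    by (simp add: int_lattice_iff mult.commute)
  moreover have "M *v (det M *s x) = det M *s v"
    by (simp add: scalar_mult_eq_scaleR matrix_vector_mult_scaleR Mx)
  ultimately show ?thesis by blast
qed

lemma integral_mat_matrix_inv: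
  fixes M :: "real^'n^'n"
  assumes M: "integral_mat M" and det: "det M = 1"
  shows "integral_mat (matrix_inv M)"
  unfolding integral_mat_def
proof (intro allI)
  fix i j
  have inv: "invertible M" by (simp add: invertible_det_nz det)
  obtain u where u: "u \<in> int_lattice" "M *v u = axis j 1"
    using int_lattice_det_scale_in_image[OF M axis_in_int_lattice, of j] det by auto
  have "matrix_inv M *v axis j 1 = u"
    by (simp flip: u(2) add: matrix_vector_mul_assoc matrix_inv_left[OF inv])
  then show "matrix_inv M $ i $ j \<in> \<int>"
    using u(1) by (auto simp: int_lattice_iff matrix_vector_mult_basis column_def vec_eq_iff)
qed

lemma invertible_real_mat: "SL_int A \<Longrightarrow> invertible (real_mat A)"
  by (simp add: invertible_det_nz det_real_mat SL_int_def)

lemma integral_mat_inv_real_mat: "SL_int A \<Longrightarrow> integral_mat (matrix_inv (real_mat A))"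
  by (simp add: integral_mat_matrix_inv integral_mat_real_mat det_real_mat SL_int_def)


primrec matpow :: "'a::semiring_1^'n^'n \<Rightarrow> nat \<Rightarrow> 'a^'n^'n" where
  "matpow M 0 = mat 1"
| "matpow M (Suc k) = M ** matpow M k"

definition mat_zpow :: "'a::field^'n^'n \<Rightarrow> int \<Rightarrow> 'a^'n^'n" where
  "mat_zpow M m = (if 0 \<le> m then matpow M (nat m) else matpow (matrix_inv M) (nat (- m)))"

lemma mat_zpow_0 [simp]: "mat_zpow M 0 = mat 1"
  by (simp add: mat_zpow_def)

lemma mat_zpow_1 [simp]: "mat_zpow M 1 = M"
  by (simp add: mat_zpow_def)

lemma mat_zpow_minus_1 [simp]: "mat_zpow M (- 1) = matrix_inv M"
  by (simp add: mat_zpow_def)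

lemma mat_zpow_succ:
  assumes "invertible M"
  shows "mat_zpow M (m + 1) = M ** mat_zpow M m"
proof (cases "0 \<le> m")
  case True
  then show ?thesis by (simp add: mat_zpow_def nat_add_distrib)
next
  case False
  define k where "k = nat (- m - 1)"
  have k: "m = - int (Suc k)" using False by (simp add: k_def)
  then have "mat_zpow M m = matrix_inv M ** matpow (matrix_inv M) k"
    and "mat_zpow M (m + 1) = matpow (matrix_inv M) k"
    by (auto simp: mat_zpow_def nat_add_distrib)
  then show ?thesis
    by (simp add: matrix_mul_assoc matrix_inv_right[OF assms])
qed

lemma mat_zpow_add:
  assumes "invertible M"
  shows "mat_zpow M (a + b) = mat_zpow M a ** mat_zpow M b"
proof (induction a rule: int_induct[where k = 0])
  case (step1 i)
  have "mat_zpow M (i + 1 + b) = M ** mat_zpow M (i + b)"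
    using mat_zpow_succ[OF assms, of "i + b"] by (simp add: ac_simps)
  then show ?case
    by (simp add: step1 mat_zpow_succ[OF assms] matrix_mul_assoc)
next
  case (step2 i)
  have pred: "mat_zpow M (j - 1) = matrix_inv M ** mat_zpow M j" for j
    using mat_zpow_succ[OF assms, of "j - 1"]
    by (simp add: matrix_mul_assoc matrix_inv_left[OF assms])
  show ?case
    using pred[of "i + b"] pred[of i] step2 by (simp add: algebra_simps matrix_mul_assoc)
qed simp

lemma mat_zpow_mult_vec:
  "invertible M \<Longrightarrow> mat_zpow M a *v (mat_zpow M b *v x) = mat_zpow M (a + b) *v x"
  by (simp add: mat_zpow_add matrix_vector_mul_assoc)

lemma integral_mat_mat_zpow:
  fixes M :: "real^'n^'n"
  assumes "integral_mat M" "integral_mat (matrix_inv M)"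
  shows "integral_mat (mat_zpow M m)"
proof -
  have "integral_mat (matpow N k)" if "integral_mat N" for N :: "real^'n^'n" and k
    using that by (induction k) (simp_all add: integral_mat_one integral_mat_mult)
  then show ?thesis using assms by (simp add: mat_zpow_def)
qed

lemma int_lattice_mat_zpow_real_mat:
  "SL_int A \<Longrightarrow> v \<in> int_lattice \<Longrightarrow> mat_zpow (real_mat A) m *v v \<in> int_lattice"
  by (intro int_lattice_mat_mult integral_mat_mat_zpow integral_mat_real_mat integral_mat_inv_real_mat)


section \<open>Covering spaces over an arbitrary base\<close>

lemma homeomorphism_pullback_sheet:
  assumes q: "homeomorphism U T p q" and h: "continuous_on Z h" "h ` Z \<subseteq> T"
  shows "homeomorphism {(z, w). z \<in> Z \<and> w \<in> U \<and> h z = p w} Z fst (\<lambda>z. (z, q (h z)))"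
proof (rule homeomorphismI)
  have "continuous_on Z (q \<circ> h)"
    using q h by (intro continuous_on_compose) (auto simp: homeomorphism_def continuous_on_subset)
  then show "continuous_on Z (\<lambda>z. (z, q (h z)))"
    by (auto intro!: continuous_intros)
  have "q (h z) \<in> U" "p (q (h z)) = h z" if "z \<in> Z" for z
    using q h(2) that by (auto simp: homeomorphism_def)
  then show "(\<lambda>z. (z, q (h z))) ` Z \<subseteq> {(z, w). z \<in> Z \<and> w \<in> U \<and> h z = p w}"
    by auto
  show "(fst x, q (h (fst x))) = x" if "x \<in> {(z, w). z \<in> Z \<and> w \<in> U \<and> h z = p w}" for x
    using q that by (auto simp: homeomorphism_def)
qed (auto intro: continuous_intros)

lemma openin_pullback_sheet:
  assumes "openin (top_of_set C) U" "openin (top_of_set Z) T"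
  shows "openin (top_of_set {(z, w). z \<in> Z \<and> w \<in> C \<and> h z = p w})
           {(z, w). z \<in> T \<and> w \<in> U \<and> h z = p w}"
proof -
  obtain OU OT where "open OU" "U = C \<inter> OU" "open OT" "T = Z \<inter> OT"
    using assms by (auto simp: openin_open)
  then have "{(z, w). z \<in> T \<and> w \<in> U \<and> h z = p w} =
      {(z, w). z \<in> Z \<and> w \<in> C \<and> h z = p w} \<inter> (OT \<times> OU)"
    and "open (OT \<times> OU)"
    by (auto intro: open_Times)
  then show ?thesis
    by (simp add: openin_open_Int)
qed

lemma pullback_covering:
  fixes p :: "'a::topological_space \<Rightarrow> 'b::topological_space"
    and h :: "'z::topological_space \<Rightarrow> 'b"
  assumes cov: "covering_space C p S" and ch: "continuous_on Z h" and hS: "h ` Z \<subseteq> S"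
  shows "covering_space {(z, w). z \<in> Z \<and> w \<in> C \<and> h z = p w} fst Z"
proof
  let ?C = "{(z, w). z \<in> Z \<and> w \<in> C \<and> h z = p w}"
  show "continuous_on ?C fst" by (intro continuous_intros)
  show "fst ` ?C = Z"
    using hS covering_space_imp_surjective[OF cov] by (force simp: image_iff)
  fix z assume z: "z \<in> Z"
  then have "h z \<in> S" using hS by blast
  then obtain T where T: "h z \<in> T" "openin (top_of_set S) T"
    and sheets: "\<exists>V. \<Union>V = C \<inter> p -` T \<and> (\<forall>u\<in>V. openin (top_of_set C) u) \<and>
      pairwise disjnt V \<and> (\<forall>u\<in>V. \<exists>q. homeomorphism u T p q)"
    using cov unfolding covering_space_def by blast
  from sheets obtain V where V: "\<Union>V = C \<inter> p -` T" "\<And>u. u \<in> V \<Longrightarrow> openin (top_of_set C) u"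
      "pairwise disjnt V" "\<And>u. u \<in> V \<Longrightarrow> \<exists>q. homeomorphism u T p q"
    by (elim exE conjE) (simp only: Ball_def)
  define T' where "T' = Z \<inter> h -` T"
  define sheet where "sheet u = {(z', w). z' \<in> T' \<and> w \<in> u \<and> h z' = p w}" for u
  have sheet_sub: "sheet u \<subseteq> ?C" if "u \<in> V" for u
    using openin_imp_subset[OF V(2)[OF that]] by (auto simp: sheet_def T'_def)
  have oT': "openin (top_of_set Z) T'"
    unfolding T'_def using continuous_openin_preimage[OF ch _ T(2)] hS by blast
  show "\<exists>T. z \<in> T \<and> openin (top_of_set Z) T \<and>
             (\<exists>v. \<Union>v = ?C \<inter> fst -` T \<and> (\<forall>u\<in>v. openin (top_of_set ?C) u) \<and>
                  pairwise disjnt v \<and> (\<forall>u\<in>v. \<exists>q. homeomorphism u T fst q))"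
  proof (intro exI conjI)
    show "z \<in> T'" using z T by (simp add: T'_def)
    show "openin (top_of_set Z) T'" by (rule oT')
    show "\<Union>(sheet ` V) = ?C \<inter> fst -` T'"
      using V(1) sheet_sub by (fastforce simp: sheet_def T'_def)
    show "\<forall>u\<in>sheet ` V. openin (top_of_set ?C) u"
      using V(2) oT' by (auto simp: sheet_def intro: openin_pullback_sheet)
    show "pairwise disjnt (sheet ` V)"
      using V(3) by (auto simp: pairwise_def disjnt_def sheet_def)
    show "\<forall>u\<in>sheet ` V. \<exists>q. homeomorphism u T' fst q"
    proof
      fix u' assume "u' \<in> sheet ` V"
      then obtain u q where "u' = sheet u" "homeomorphism u T p q" using V(4) by blast
      moreover have "continuous_on T' h" "h ` T' \<subseteq> T"
        using ch by (auto simp: T'_def intro: continuous_on_subset)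
      ultimately show "\<exists>q. homeomorphism u' T' fst q"
        unfolding sheet_def by (blast intro: homeomorphism_pullback_sheet)
    qed
  qed
qed

text \<open>The library's path lifting and monodromy results require a normed base space; pulling
  the covering back along the path (resp. the homotopy) removes this restriction.\<close>

lemma covering_space_lift_path_gen:
  fixes p :: "'a::real_normed_vector \<Rightarrow> 'b::topological_space"
  assumes cov: "covering_space C p S" and e: "e \<in> C"
    and g: "path g" "path_image g \<subseteq> S" "g 0 = p e"
  obtains l where "path l" "path_image l \<subseteq> C" "l 0 = e" "\<And>t. t \<in> {0..1} \<Longrightarrow> p (l t) = g t"
proof -
  let ?C = "{(z, w). z \<in> {0..1::real} \<and> w \<in> C \<and> g z = p w}"
  have cov': "covering_space ?C fst {0..1}"
    using g by (intro pullback_covering[OF cov]) (auto simp: path_def path_image_def)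
  obtain H where H: "path H" "path_image H \<subseteq> ?C" "pathstart H = (0, e)"
    "\<And>t. t \<in> {0..1} \<Longrightarrow> fst (H t) = t"
    by (rule covering_space_lift_path_strong[OF cov', of "(0, e)" id])
       (use e g in \<open>auto simp: pathstart_def path_image_def path_def\<close>)
  show ?thesis
  proof
    show "path (snd \<circ> H)" using H(1) unfolding path_def by (intro continuous_intros)
    show "path_image (snd \<circ> H) \<subseteq> C" "(snd \<circ> H) 0 = e"
      using H(2,3) by (auto simp: path_image_def pathstart_def)
    show "p ((snd \<circ> H) t) = g t" if "t \<in> {0..1}" for t
      using H(2) H(4)[OF that] that by (force simp: path_image_def)
  qed
qed

lemma homotopic_paths_square_boundary:
  "homotopic_paths ({0..1} \<times> {0..1})
     ((\<lambda>x. (0::real, x)) +++ (\<lambda>t. (t, 1::real))) ((\<lambda>t. (t, 0::real)) +++ (\<lambda>x. (1::real, x)))"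
    (is "homotopic_paths ?Z ?a1 ?a2")
proof (rule homotopic_paths_linear)
  show "path ?a1" "path ?a2"
    by (intro path_join_imp; auto simp: path_def pathstart_def pathfinish_def intro!: continuous_intros)+
  show "pathstart ?a2 = pathstart ?a1" "pathfinish ?a2 = pathfinish ?a1"
    by (simp_all add: pathstart_def pathfinish_def joinpaths_def)
  show "closed_segment (?a1 t) (?a2 t) \<subseteq> ?Z" if "t \<in> {0..1}" for t
    using that by (intro closed_segment_subset) (auto simp: joinpaths_def intro: convex_Times)
qed

lemma covering_space_monodromy_gen:
  fixes p :: "'a::real_normed_vector \<Rightarrow> 'b::topological_space"
  assumes cov: "covering_space C p S" and hom: "homotopic_paths S g1 g2"
    and l1: "path l1" "path_image l1 \<subseteq> C" "\<And>t. t \<in> {0..1} \<Longrightarrow> p (l1 t) = g1 t"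
    and l2: "path l2" "path_image l2 \<subseteq> C" "\<And>t. t \<in> {0..1} \<Longrightarrow> p (l2 t) = g2 t"
    and st: "l1 0 = l2 0"
  shows "l1 1 = l2 1"
proof -
  obtain H where cH: "continuous_on ({0..1} \<times> {0..1}) H" and HS: "H \<in> ({0..1} \<times> {0..1}) \<rightarrow> S"
    and H0: "\<forall>x\<in>{0..1}. H (0, x) = g1 x" and H1: "\<forall>x\<in>{0..1}. H (1, x) = g2 x"
    and Hend: "\<forall>t\<in>{0..1::real}. pathstart (H \<circ> Pair t) = pathstart g1 \<and> pathfinish (H \<circ> Pair t) = pathfinish g1"
    using hom unfolding homotopic_paths by blast
  have Hs: "H (t, 0) = g1 0" "H (t, 1) = g1 1" if "t \<in> {0..1}" for t
    using Hend that by (auto simp: pathstart_def pathfinish_def)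
  have g12: "g1 0 = g2 0" "g1 1 = g2 1"
    using homotopic_paths_imp_pathstart[OF hom] homotopic_paths_imp_pathfinish[OF hom]
    by (simp_all add: pathstart_def pathfinish_def)
  define Z where "Z = {0..1::real} \<times> {0..1::real}"
  let ?C = "{(z, w). z \<in> Z \<and> w \<in> C \<and> H z = p w}"
  have cov': "covering_space ?C fst Z"
    by (rule pullback_covering[OF cov]) (use cH HS in \<open>auto simp: Z_def\<close>)
  txt \<open>The homotopy pulls back to a covering of the square, in which \<open>m1\<close> and \<open>m2\<close> lift the two
    boundary paths from \<open>(0, 0)\<close> to \<open>(1, 1)\<close>.\<close>
  define a1 where "a1 = (\<lambda>x::real. (0::real, x)) +++ (\<lambda>t. (t, 1::real))"
  define a2 where "a2 = (\<lambda>t::real. (t, 0::real)) +++ (\<lambda>x. (1::real, x))"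
  define m1 where "m1 = (\<lambda>x::real. ((0::real, x), l1 x)) +++ (\<lambda>t. ((t, 1::real), l1 1))"
  define m2 where "m2 = (\<lambda>t::real. ((t, 0::real), l2 0)) +++ (\<lambda>x. ((1::real, x), l2 x))"
  have ha: "homotopic_paths Z a1 a2"
    unfolding Z_def a1_def a2_def by (rule homotopic_paths_square_boundary)
  have a: "path a1" "path_image a1 \<subseteq> Z" "path a2" "path_image a2 \<subseteq> Z"
    using homotopic_paths_imp_path[OF ha] homotopic_paths_imp_subset[OF ha] by auto
  have l1in: "l1 x \<in> C" "l2 x \<in> C" if "x \<in> {0..1}" for x
    using l1(2) l2(2) that by (auto simp: path_image_def)
  have cl: "continuous_on {0..1} l1" "continuous_on {0..1} l2"
    using l1(1) l2(1) by (simp_all add: path_def)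
  have paths: "path m1" "path m2"
    unfolding m1_def m2_def
    by (intro path_join_imp;
        auto simp: path_def pathstart_def pathfinish_def intro!: continuous_intros cl)+
  have im: "path_image m1 \<subseteq> ?C" "path_image m2 \<subseteq> ?C"
    unfolding m1_def m2_def
    by (rule order_trans[OF path_image_join_subset];
        use l1in l1(3) l2(3) H0 H1 Hs g12 in \<open>auto simp: Z_def path_image_def\<close>)+
  have "pathfinish m1 = pathfinish m2"
    by (rule covering_space_monodromy[OF cov' a ha paths(1) im(1) _ paths(2) im(2)])
       (auto simp: m1_def m2_def a1_def a2_def pathstart_def joinpaths_def st)
  then show ?thesis by (simp add: m1_def m2_def pathfinish_def joinpaths_def)
qed


section \<open>The universal cover of the mapping torus\<close>

definition mt_strip :: "((real^'n) \<times> real) set" where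
  "mt_strip = UNIV \<times> {0..1}"

lemma mt_base_eq: "mt_base = top_of_set mt_strip"
  unfolding mt_base_def mt_strip_def by (metis prod_topology_subtopology_eu subtopology_UNIV)

lemma topspace_mapping_torus: "topspace (mapping_torus A) = mt_class A ` mt_strip"
  by (simp add: mapping_torus_def topspace_quotient_topology mt_base_eq)

lemma openin_mapping_torus:
  "openin (mapping_torus A) V \<longleftrightarrow>
     V \<subseteq> mt_class A ` mt_strip \<and> openin (top_of_set mt_strip) {x \<in> mt_strip. mt_class A x \<in> V}"
  by (simp add: mapping_torus_def openin_quotient_topology mt_base_eq)

lemma continuous_map_mt_class: "continuous_map (top_of_set mt_strip) (mapping_torus A) (mt_class A)"
  by (auto simp: continuous_map_def topspace_mapping_torus openin_mapping_torus
      dest: openin_subset intro: openin_subtopology_Int_subset)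

lemma mt_class_iff: "q \<in> mt_class A p \<longleftrightarrow> q \<in> mt_strip \<and> mt_rel A p q"
  by (simp add: mt_class_def mt_base_eq)

lemma mt_rel_refl: "mt_rel A p p"
  by (simp add: mt_rel_def)

lemma mt_class_eq_iff:
  assumes "p \<in> mt_strip" "snd p < 1" "p' \<in> mt_strip" "snd p' < 1"
  shows "mt_class A p = mt_class A p' \<longleftrightarrow> snd p = snd p' \<and> fst p - fst p' \<in> int_lattice"
proof
  assume "mt_class A p = mt_class A p'"
  then have "mt_rel A p p'"
    using assms mt_rel_refl by (metis mt_class_iff)
  then show "snd p = snd p' \<and> fst p - fst p' \<in> int_lattice"
    using assms by (auto simp: mt_rel_def)
next
  assume "snd p = snd p' \<and> fst p - fst p' \<in> int_lattice"
  then have "mt_rel A p q \<longleftrightarrow> mt_rel A p' q" for q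
    using assms int_lattice_diff_shift unfolding mt_rel_def by auto
  then show "mt_class A p = mt_class A p'" unfolding mt_class_def by auto
qed

lemma mt_class_top:
  assumes A: "SL_int A"
  shows "mt_class A (y, 1) = mt_class A (real_mat A *v y, 0)"
proof -
  have "y - z \<in> int_lattice \<longleftrightarrow> real_mat A *v y - real_mat A *v z \<in> int_lattice" for z
  proof
    assume "y - z \<in> int_lattice"
    then show "real_mat A *v y - real_mat A *v z \<in> int_lattice"
      by (metis integral_mat_real_mat int_lattice_mat_mult matrix_vector_mult_diff_distrib)
  next
    assume "real_mat A *v y - real_mat A *v z \<in> int_lattice"
    then have "matrix_inv (real_mat A) *v (real_mat A *v y - real_mat A *v z) \<in> int_lattice"
      by (rule int_lattice_mat_mult[OF integral_mat_inv_real_mat[OF A]])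
    then show "y - z \<in> int_lattice"
      by (simp add: matrix_vector_mult_diff_distrib matrix_vector_mul_assoc
          matrix_inv_left[OF invertible_real_mat[OF A]])
  qed
  then have "mt_rel A (y, 1) q \<longleftrightarrow> mt_rel A (real_mat A *v y, 0) q" for q
    unfolding mt_rel_def by auto
  then show ?thesis unfolding mt_class_def by auto
qed

text \<open>The covering space library is formulated for type-class topologies, whereas the topology
  of the mapping torus depends on \<open>A\<close>. We therefore work in the topological sum of all mapping
  tori of a given dimension, in which the mapping torus of \<open>A\<close> is the open subspace
  \<open>mt_points A\<close>.\<close>

datatype ('n::finite) mt_point = MT "int^'n^'n" (mt_set: "((real^'n) \<times> real) set")

instantiation mt_point :: (finite) topological_space
begin

definition open_mt_point_def:
  "open (U :: 'a mt_point set) \<longleftrightarrow>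
     (\<forall>A. openin (mapping_torus A) {Q \<in> topspace (mapping_torus A). MT A Q \<in> U})"

instance
proof
  show "open (UNIV :: 'a mt_point set)"
    by (simp add: open_mt_point_def)
next
  fix S T :: "'a mt_point set"
  assume "open S" "open T"
  moreover have "{Q \<in> topspace X. MT A Q \<in> S \<inter> T} =
      {Q \<in> topspace X. MT A Q \<in> S} \<inter> {Q \<in> topspace X. MT A Q \<in> T}" for X and A :: "int^'a^'a"
    by blast
  ultimately show "open (S \<inter> T)"
    by (simp add: open_mt_point_def openin_Int)
next
  fix K :: "'a mt_point set set"
  assume "\<forall>S\<in>K. open S"
  moreover have "{Q \<in> topspace X. MT A Q \<in> \<Union>K} = (\<Union>S\<in>K. {Q \<in> topspace X. MT A Q \<in> S})"
    for X and A :: "int^'a^'a"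
    by blast
  ultimately show "open (\<Union>K)"
    by (auto simp: open_mt_point_def intro!: openin_Union)
qed

end

definition mt_points :: "int^'n^'n \<Rightarrow> 'n mt_point set" where
  "mt_points A = MT A ` topspace (mapping_torus A)"

lemma openin_mt_points:
  "openin (top_of_set (mt_points A)) W \<longleftrightarrow>
     W \<subseteq> mt_points A \<and> openin (mapping_torus A) {Q \<in> topspace (mapping_torus A). MT A Q \<in> W}"
proof
  assume "openin (top_of_set (mt_points A)) W"
  then obtain U where "open U" "W = mt_points A \<inter> U" by (auto simp: openin_open)
  moreover have "{Q \<in> topspace (mapping_torus A). MT A Q \<in> mt_points A \<inter> U} =
      {Q \<in> topspace (mapping_torus A). MT A Q \<in> U}"
    by (auto simp: mt_points_def)
  ultimately show "W \<subseteq> mt_points A \<and>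
      openin (mapping_torus A) {Q \<in> topspace (mapping_torus A). MT A Q \<in> W}"
    by (simp add: open_mt_point_def)
next
  assume W: "W \<subseteq> mt_points A \<and> openin (mapping_torus A) {Q \<in> topspace (mapping_torus A). MT A Q \<in> W}"
  define V where "V = {Q \<in> topspace (mapping_torus A). MT A Q \<in> W}"
  have "{Q \<in> topspace (mapping_torus A'). MT A' Q \<in> MT A ` V} = (if A' = A then V else {})" for A'
    by (auto simp: V_def)
  then have "open (MT A ` V)"
    using W by (simp add: open_mt_point_def V_def)
  moreover have "W = mt_points A \<inter> MT A ` V"
    using W by (auto simp: V_def mt_points_def)
  ultimately show "openin (top_of_set (mt_points A)) W" by (auto simp: openin_open)
qed

lemma homeomorphic_maps_MT:
  "homeomorphic_maps (mapping_torus A) (top_of_set (mt_points A)) (MT A) mt_set"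
  unfolding homeomorphic_maps_def continuous_map_def
proof (intro conjI allI impI ballI)
  show "openin (mapping_torus A) {Q \<in> topspace (mapping_torus A). MT A Q \<in> W}"
    if "openin (top_of_set (mt_points A)) W" for W
    using that by (simp add: openin_mt_points)
next
  fix V assume V: "openin (mapping_torus A) V"
  then have "{Q \<in> topspace (mapping_torus A). MT A Q \<in> {x \<in> mt_points A. mt_set x \<in> V}} = V"
    by (auto simp: mt_points_def dest: openin_subset)
  then show "openin (top_of_set (mt_points A)) {x \<in> topspace (top_of_set (mt_points A)). mt_set x \<in> V}"
    using V by (simp add: openin_mt_points)
qed (auto simp: mt_points_def openin_mt_points)

definition mt_proj :: "int^'n^'n \<Rightarrow> (real^'n) \<times> real \<Rightarrow> ((real^'n) \<times> real) set" where
  "mt_proj A e = mt_class A (mat_zpow (real_mat A) \<lfloor>snd e\<rfloor> *v fst e, frac (snd e))"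

definition mt_cover :: "int^'n^'n \<Rightarrow> (real^'n) \<times> real \<Rightarrow> 'n mt_point" where
  "mt_cover A e = MT A (mt_proj A e)"

definition deck :: "int^'n^'n \<Rightarrow> (real^'n) \<times> int \<Rightarrow> (real^'n) \<times> real \<Rightarrow> (real^'n) \<times> real" where
  "deck A g e = (mat_zpow (real_mat A) (- snd g) *v fst e + fst g, snd e + of_int (snd g))"

lemma frac_in_mt_strip: "(y, frac s) \<in> mt_strip"
  by (simp add: mt_strip_def frac_lt_1 less_imp_le)

lemma mt_proj_in_topspace: "mt_proj A e \<in> topspace (mapping_torus A)"
  by (simp add: mt_proj_def topspace_mapping_torus frac_in_mt_strip)

lemma mt_proj_slab:
  assumes A: "SL_int A" and s: "of_int m \<le> s" "s \<le> of_int m + 1"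
  shows "mt_proj A (x, s) = mt_class A (mat_zpow (real_mat A) m *v x, s - of_int m)"
proof (cases "s < of_int m + 1")
  case True
  then have "\<lfloor>s\<rfloor> = m" using s by linarith
  then show ?thesis by (simp add: mt_proj_def frac_def)
next
  case False
  then have s1: "s = of_int m + 1" using s by simp
  then have "mt_proj A (x, s) = mt_class A (real_mat A *v (mat_zpow (real_mat A) m *v x), 0)"
    by (simp add: mt_proj_def mat_zpow_succ[OF invertible_real_mat[OF A]] matrix_vector_mul_assoc)
  then show ?thesis
    by (simp add: s1 mt_class_top[OF A])
qed

lemma mt_proj_strip: "SL_int A \<Longrightarrow> p \<in> mt_strip \<Longrightarrow> mt_proj A p = mt_class A p"
  using mt_proj_slab[of A 0] by (auto simp: mt_strip_def)

lemma mt_proj_image: "SL_int A \<Longrightarrow> range (mt_proj A) = topspace (mapping_torus A)"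
  using mt_proj_in_topspace mt_proj_strip by (fastforce simp: topspace_mapping_torus)

lemma mt_proj_deck:
  assumes A: "SL_int A" and v: "v \<in> int_lattice"
  shows "mt_proj A (deck A (v, m) e) = mt_proj A e"
proof -
  let ?M = "real_mat A"
  obtain x s where e: "e = (x, s)" by fastforce
  have "mat_zpow ?M (\<lfloor>s\<rfloor> + m) *v (mat_zpow ?M (- m) *v x + v) - mat_zpow ?M \<lfloor>s\<rfloor> *v x =
      mat_zpow ?M (\<lfloor>s\<rfloor> + m) *v v"
    by (simp add: matrix_vector_right_distrib mat_zpow_mult_vec[OF invertible_real_mat[OF A]])
  also have "\<dots> \<in> int_lattice"
    by (rule int_lattice_mat_zpow_real_mat[OF A v])
  finally show ?thesis
    unfolding mt_proj_def deck_def e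
    by (subst mt_class_eq_iff) (simp_all add: frac_in_mt_strip frac_lt_1)
qed

lemma mt_proj_eq_imp_deck:
  assumes A: "SL_int A" and eq: "mt_proj A e = mt_proj A e'"
  shows "\<exists>v\<in>int_lattice. \<exists>m. e' = deck A (v, m) e"
proof -
  let ?M = "real_mat A"
  obtain x s x' s' where e: "e = (x, s)" "e' = (x', s')" by fastforce
  define a b where "a = \<lfloor>s\<rfloor>" and "b = \<lfloor>s'\<rfloor>"
  have "mt_class A (mat_zpow ?M a *v x, frac s) = mt_class A (mat_zpow ?M b *v x', frac s')"
    using eq by (simp add: mt_proj_def e a_def b_def)
  then have "frac s = frac s'" and w: "mat_zpow ?M a *v x - mat_zpow ?M b *v x' \<in> int_lattice"
    by (subst (asm) mt_class_eq_iff; simp add: frac_in_mt_strip frac_lt_1)+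
  then have s': "s + of_int (b - a) = s'"
    by (simp add: frac_def a_def b_def)
  define v where "v = - (mat_zpow ?M (- b) *v (mat_zpow ?M a *v x - mat_zpow ?M b *v x'))"
  have "v \<in> int_lattice"
    unfolding v_def using w by (intro int_lattice_minus int_lattice_mat_zpow_real_mat[OF A])
  moreover have "mat_zpow ?M (- (b - a)) *v x + v = x'"
    by (simp add: v_def matrix_vector_mult_diff_distrib mat_zpow_mult_vec[OF invertible_real_mat[OF A]])
  ultimately have "e' = deck A (v, b - a) e"
    using s' by (simp add: deck_def e)
  then show ?thesis
    using \<open>v \<in> int_lattice\<close> by blast
qed

lemma deck_inverse:
  assumes A: "SL_int A"
  shows "deck A (- (mat_zpow (real_mat A) m *v v), - m) (deck A (v, m) e) = e"
    and "deck A (v, m) (deck A (- (mat_zpow (real_mat A) m *v v), - m) e) = e"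
  using mat_zpow_mult_vec[OF invertible_real_mat[OF A]]
  by (simp_all add: deck_def matrix_vector_right_distrib matrix_vector_mult_diff_distrib
      matrix_vector_mult_uminus_right)

lemma continuous_deck: "continuous_on S (deck A g)"
  unfolding deck_def
  by (intro continuous_intros linear_continuous_on_compose[OF _ matrix_vector_mul_linear])

lemma open_deck_image:
  assumes "SL_int A" "open U"
  shows "open (deck A (v, m) ` U)"
proof -
  have "deck A (v, m) ` U = deck A (- (mat_zpow (real_mat A) m *v v), - m) -` U"
    using deck_inverse[OF assms(1)] by (auto simp: image_iff) metis
  then show ?thesis
    using assms(2) by (simp add: open_vimage continuous_deck)
qed

lemma continuous_on_MT_mt_class: "continuous_on mt_strip (\<lambda>p. MT A (mt_class A p))"
proof -
  have "continuous_map (top_of_set mt_strip) (top_of_set (mt_points A)) (MT A \<circ> mt_class A)"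
    using continuous_map_mt_class homeomorphic_maps_MT
    unfolding homeomorphic_maps_def by (blast intro: continuous_map_compose)
  then show ?thesis
    by (simp add: continuous_map_in_subtopology o_def)
qed

lemma mt_cover_image: "SL_int A \<Longrightarrow> range (mt_cover A) = mt_points A"
  by (simp add: mt_cover_def mt_points_def image_image flip: mt_proj_image)

lemma mt_cover_deck: "SL_int A \<Longrightarrow> v \<in> int_lattice \<Longrightarrow> mt_cover A (deck A (v, m) e) = mt_cover A e"
  by (simp add: mt_cover_def mt_proj_deck)

lemma mt_cover_eq_imp_deck:
  "SL_int A \<Longrightarrow> mt_cover A e = mt_cover A e' \<Longrightarrow> \<exists>v\<in>int_lattice. \<exists>m. e' = deck A (v, m) e"
  by (simp add: mt_cover_def mt_proj_eq_imp_deck)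

lemma continuous_mt_cover_slab:
  fixes A :: "int^'n^'n"
  assumes A: "SL_int A"
  shows "continuous_on (UNIV \<times> {of_int m .. of_int m + 1}) (mt_cover A)"
proof -
  define aff where "aff e = (mat_zpow (real_mat A) m *v fst e, snd e - of_int m)" for e :: "(real^'n) \<times> real"
  have "continuous_on (UNIV \<times> {of_int m .. of_int m + 1}) aff"
    unfolding aff_def by (intro continuous_intros linear_continuous_on_compose[OF _ matrix_vector_mul_linear])
  moreover have "aff ` (UNIV \<times> {of_int m .. of_int m + 1}) \<subseteq> mt_strip"
    by (auto simp: aff_def mt_strip_def)
  ultimately have "continuous_on (UNIV \<times> {of_int m .. of_int m + 1}) (\<lambda>e. MT A (mt_class A (aff e)))"
    by (rule continuous_on_compose2[OF continuous_on_MT_mt_class])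
  then show ?thesis
    by (rule continuous_on_eq) (auto simp: aff_def mt_cover_def mt_proj_slab[OF A])
qed

lemma continuous_mt_cover:
  fixes A :: "int^'n^'n"
  assumes A: "SL_int A"
  shows "continuous_on UNIV (mt_cover A)"
proof -
  define N where "N m = (UNIV :: (real^'n) set) \<times> {of_int m - 1 <..< (of_int m + 1 :: real)}" for m :: int
  have "continuous_on (N m) (mt_cover A)" for m
  proof (rule continuous_on_subset)
    show "continuous_on ((UNIV \<times> {of_int (m - 1) .. of_int (m - 1) + 1}) \<union>
        (UNIV \<times> {of_int m .. of_int m + 1})) (mt_cover A)"
      by (intro continuous_on_closed_Un continuous_mt_cover_slab[OF A] closed_Times) auto
  qed (auto simp: N_def)
  moreover have "open (N m)" for m
    by (simp add: N_def open_Times)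
  ultimately have "continuous_on (\<Union>m. N m) (mt_cover A)"
    by (intro continuous_on_open_UN)
  moreover have "e \<in> N \<lfloor>snd e\<rfloor>" for e
    by (cases e) (simp add: N_def; linarith)
  then have "(\<Union>m. N m) = UNIV" by blast
  ultimately show ?thesis
    by simp
qed

lemma open_map_mt_cover:
  assumes A: "SL_int A" and U: "open U"
  shows "openin (top_of_set (mt_points A)) (mt_cover A ` U)"
proof -
  have "{x \<in> mt_strip. mt_class A x \<in> mt_proj A ` U} =
      mt_strip \<inter> (\<Union>g\<in>int_lattice \<times> UNIV. deck A g -` U)"
  proof (intro Set.set_eqI iffI)
    fix x assume "x \<in> {x \<in> mt_strip. mt_class A x \<in> mt_proj A ` U}"
    then obtain u where x: "x \<in> mt_strip" "u \<in> U" "mt_proj A x = mt_proj A u"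
      by (auto simp: mt_proj_strip[OF A])
    then show "x \<in> mt_strip \<inter> (\<Union>g\<in>int_lattice \<times> UNIV. deck A g -` U)"
      using mt_proj_eq_imp_deck[OF A x(3)] by auto
  next
    fix x assume "x \<in> mt_strip \<inter> (\<Union>g\<in>int_lattice \<times> UNIV. deck A g -` U)"
    then obtain v m where "x \<in> mt_strip" "v \<in> int_lattice" "deck A (v, m) x \<in> U" by blast
    then show "x \<in> {x \<in> mt_strip. mt_class A x \<in> mt_proj A ` U}"
      by (metis (mono_tags, lifting) image_eqI mem_Collect_eq mt_proj_deck[OF A] mt_proj_strip[OF A])
  qed
  moreover have "open (\<Union>g\<in>int_lattice \<times> UNIV. deck A g -` U)"
    by (intro open_UN ballI open_vimage U continuous_deck)
  ultimately have "openin (mapping_torus A) (mt_proj A ` U)"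
    using mt_proj_in_topspace
    by (auto simp: openin_mapping_torus topspace_mapping_torus[symmetric] intro: openin_open_Int)
  moreover have "{Q \<in> topspace (mapping_torus A). MT A Q \<in> mt_cover A ` U} = mt_proj A ` U"
    using mt_proj_in_topspace by (auto simp: mt_cover_def)
  ultimately show ?thesis
    using mt_cover_image[OF A] by (auto simp: openin_mt_points)
qed

lemma deck_ball_eq_imp_eq:
  assumes A: "SL_int A" and b: "b \<in> ball e (1/2)" "b' \<in> ball e (1/2)"
    and v: "v \<in> int_lattice" "v' \<in> int_lattice"
    and eq: "deck A (v, m) b = deck A (v', m') b'"
  shows "m = m' \<and> v = v' \<and> b = b'"
proof -
  have db: "dist b b' < 1"
    using b dist_triangle_half_l[of b e 1 b'] by (simp add: dist_commute)
  have s: "snd b + of_int m = snd b' + of_int m'"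
    using eq by (simp add: deck_def)
  then have "\<bar>of_int (m - m') :: real\<bar> < 1"
    using dist_snd_le[of b b'] db by (simp add: dist_real_def)
  then have mm: "m = m'" by linarith
  have "fst b - fst b' = mat_zpow (real_mat A) m *v (mat_zpow (real_mat A) (- m) *v (fst b - fst b'))"
    by (simp add: mat_zpow_mult_vec[OF invertible_real_mat[OF A]])
  also have "\<dots> = mat_zpow (real_mat A) m *v (v' - v)"
  proof -
    have "mat_zpow (real_mat A) (- m) *v fst b + v = mat_zpow (real_mat A) (- m) *v fst b' + v'"
      using eq mm by (simp add: deck_def)
    then have "mat_zpow (real_mat A) (- m) *v (fst b - fst b') = v' - v"
      by (simp add: matrix_vector_mult_diff_distrib algebra_simps)
    then show ?thesis
      by simp
  qed
  finally have "fst b - fst b' \<in> int_lattice"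
    using v by (simp add: int_lattice_diff int_lattice_mat_zpow_real_mat[OF A])
  moreover have "norm (fst b - fst b') < 1"
    using dist_fst_le[of b b'] db by (simp add: dist_norm)
  ultimately have "fst b - fst b' = 0"
    by (rule int_lattice_norm_less_1)
  then show ?thesis
    using eq s mm by (simp add: deck_def prod_eq_iff)
qed

lemma disjoint_deck_balls:
  assumes A: "SL_int A"
  shows "pairwise disjnt ((\<lambda>g. deck A g ` ball e (1/2)) ` (int_lattice \<times> UNIV))"
  unfolding pairwise_def disjnt_def
proof (intro ballI impI)
  fix u1 u2
  assume u1: "u1 \<in> (\<lambda>g. deck A g ` ball e (1/2)) ` (int_lattice \<times> UNIV)"
    and u2: "u2 \<in> (\<lambda>g. deck A g ` ball e (1/2)) ` (int_lattice \<times> UNIV)" and "u1 \<noteq> u2"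
  from u1 u2 obtain v1 m1 v2 m2 where u: "u1 = deck A (v1, m1) ` ball e (1/2)" "u2 = deck A (v2, m2) ` ball e (1/2)"
    and v: "v1 \<in> int_lattice" "v2 \<in> int_lattice"
    by (auto simp del: mem_ball)
  show "u1 \<inter> u2 = {}"
  proof (rule ccontr)
    assume "u1 \<inter> u2 \<noteq> {}"
    then obtain b1 b2 where "b1 \<in> ball e (1/2)" "b2 \<in> ball e (1/2)"
      "deck A (v1, m1) b1 = deck A (v2, m2) b2"
      unfolding u by blast
    then have "m1 = m2 \<and> v1 = v2"
      using deck_ball_eq_imp_eq[OF A _ _ v] by metis
    then show False
      using \<open>u1 \<noteq> u2\<close> by (simp add: u)
  qed
qed

lemma homeomorphism_mt_cover_deck_ball:
  assumes A: "SL_int A" and v: "v \<in> int_lattice"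
  shows "\<exists>q. homeomorphism (deck A (v, m) ` ball e (1/2)) (mt_cover A ` ball e (1/2)) (mt_cover A) q"
proof -
  let ?B = "ball e (1/2)"
  let ?U = "deck A (v, m) ` ?B"
  have image: "mt_cover A ` ?U = mt_cover A ` ?B"
    by (simp add: image_image mt_cover_deck[OF A v])
  have "inj_on (mt_cover A) ?U"
  proof (rule inj_onI)
    fix z1 z2 assume "z1 \<in> ?U" "z2 \<in> ?U" and eq: "mt_cover A z1 = mt_cover A z2"
    then obtain b1 b2 where b: "b1 \<in> ?B" "b2 \<in> ?B" "z1 = deck A (v, m) b1" "z2 = deck A (v, m) b2"
      by auto
    then obtain w k where "w \<in> int_lattice" "b2 = deck A (w, k) b1"
      using eq mt_cover_deck[OF A v] mt_cover_eq_imp_deck[OF A] by metis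
    then have "b1 = b2"
      using deck_ball_eq_imp_eq[OF A _ _ _ zero_in_int_lattice, of b1 e b2 w k 0] b(1,2)
      by (simp add: deck_def)
    then show "z1 = z2" using b by simp
  qed
  moreover have "openin (top_of_set (mt_cover A ` ?B)) (mt_cover A ` W)"
    if "openin (top_of_set ?U) W" for W
  proof -
    have "open W" "W \<subseteq> ?U"
      using that open_deck_image[OF A, of ?B] by (simp_all add: openin_open_eq)
    then show ?thesis
      using open_map_mt_cover[OF A] image
      by (metis image_mono open_ball openin_imp_subset openin_subset_trans)
  qed
  ultimately show ?thesis
    using homeomorphism_injective_open_map[OF _ image]
      continuous_on_subset[OF continuous_mt_cover[OF A]]
    by (metis subset_UNIV)
qed

lemma covering_space_mt_cover:
  assumes A: "SL_int A"
  shows "covering_space UNIV (mt_cover A) (mt_points A)"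
proof
  show "continuous_on UNIV (mt_cover A)" by (rule continuous_mt_cover[OF A])
  show "mt_cover A ` UNIV = mt_points A" by (rule mt_cover_image[OF A])
  fix y assume "y \<in> mt_points A"
  then obtain e where ye: "y = mt_cover A e"
    using mt_cover_image[OF A] by blast
  define T where "T = mt_cover A ` ball e (1/2)"
  define V where "V = (\<lambda>g. deck A g ` ball e (1/2)) ` (int_lattice \<times> UNIV)"
  have "\<Union>V = UNIV \<inter> mt_cover A -` T"
  proof (intro Set.set_eqI iffI)
    fix z assume "z \<in> \<Union>V"
    then show "z \<in> UNIV \<inter> mt_cover A -` T"
      using mt_cover_deck[OF A] by (auto simp: V_def T_def)
  next
    fix z assume "z \<in> UNIV \<inter> mt_cover A -` T"
    then obtain b where b: "b \<in> ball e (1/2)" "mt_cover A b = mt_cover A z"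
      by (auto simp: T_def)
    then obtain v m where "v \<in> int_lattice" "z = deck A (v, m) b"
      using mt_cover_eq_imp_deck[OF A] by metis
    then show "z \<in> \<Union>V"
      using b(1) unfolding V_def by blast
  qed
  moreover have "open u" "\<exists>q. homeomorphism u T (mt_cover A) q" if "u \<in> V" for u
    using that open_deck_image[OF A] homeomorphism_mt_cover_deck_ball[OF A, where e = e]
    by (auto simp: V_def T_def)
  ultimately show "\<exists>T. y \<in> T \<and> openin (top_of_set (mt_points A)) T \<and>
             (\<exists>v. \<Union>v = UNIV \<inter> mt_cover A -` T \<and> (\<forall>u\<in>v. openin (top_of_set UNIV) u) \<and>
                  pairwise disjnt v \<and> (\<forall>u\<in>v. \<exists>q. homeomorphism u T (mt_cover A) q))"
    using open_map_mt_cover[OF A, of "ball e (1/2)"] disjoint_deck_balls[OF A, of e]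
    by (intro exI[of _ T] conjI exI[of _ V]) (auto simp: T_def V_def ye)
qed


section \<open>The fundamental group of the mapping torus\<close>

abbreviation mt_loops :: "int^'n^'n \<Rightarrow> (real \<Rightarrow> ((real^'n) \<times> real) set) set" where
  "mt_loops A \<equiv> loops_at (mapping_torus A) (mt_class A (0, 0))"

abbreviation mt_loop_homotopic ::
    "int^'n^'n \<Rightarrow> (real \<Rightarrow> ((real^'n) \<times> real) set) \<Rightarrow> (real \<Rightarrow> ((real^'n) \<times> real) set) \<Rightarrow> bool" where
  "mt_loop_homotopic A \<equiv> loop_homotopic (mapping_torus A) (mt_class A (0, 0))"

abbreviation mt_loop_class ::
    "int^'n^'n \<Rightarrow> (real \<Rightarrow> ((real^'n) \<times> real) set) \<Rightarrow> (real \<Rightarrow> ((real^'n) \<times> real) set) set" where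
  "mt_loop_class A \<equiv> loop_class (mapping_torus A) (mt_class A (0, 0))"

lemma continuous_map_MT: "continuous_map (mapping_torus A) (top_of_set (mt_points A)) (MT A)"
  using homeomorphic_maps_MT[of A] unfolding homeomorphic_maps_def by blast

lemma continuous_map_mt_set: "continuous_map (top_of_set (mt_points A)) (mapping_torus A) mt_set"
  using homeomorphic_maps_MT[of A] unfolding homeomorphic_maps_def by blast

lemma pathin_mapping_torus_iff:
  "pathin (mapping_torus A) g \<longleftrightarrow> path (MT A \<circ> g) \<and> path_image (MT A \<circ> g) \<subseteq> mt_points A"
proof -
  have "pathin (mapping_torus A) g \<longleftrightarrow>
      continuous_map (top_of_set {0..1}) (top_of_set (mt_points A)) (MT A \<circ> g)"
  proof
    assume "pathin (mapping_torus A) g"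
    then show "continuous_map (top_of_set {0..1}) (top_of_set (mt_points A)) (MT A \<circ> g)"
      unfolding pathin_def by (rule continuous_map_compose[OF _ continuous_map_MT])
  next
    assume "continuous_map (top_of_set {0..1}) (top_of_set (mt_points A)) (MT A \<circ> g)"
    then have "continuous_map (top_of_set {0..1}) (mapping_torus A) (mt_set \<circ> (MT A \<circ> g))"
      by (rule continuous_map_compose[OF _ continuous_map_mt_set])
    then show "pathin (mapping_torus A) g"
      by (simp add: pathin_def o_def)
  qed
  then show ?thesis
    by (simp add: continuous_map_in_subtopology path_def path_image_def image_subset_iff_funcset o_def)
qed

lemma mt_loops_iff:
  "g \<in> mt_loops A \<longleftrightarrow>
     path (MT A \<circ> g) \<and> path_image (MT A \<circ> g) \<subseteq> mt_points A \<and> g 0 = mt_class A (0, 0) \<and>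
     g 1 = mt_class A (0, 0)"
  by (simp add: loops_at_def pathin_mapping_torus_iff)

lemma mt_loop_homotopic_iff:
  assumes g: "g \<in> mt_loops A" and h: "h \<in> mt_loops A"
  shows "mt_loop_homotopic A g h \<longleftrightarrow> homotopic_paths (mt_points A) (MT A \<circ> g) (MT A \<circ> h)"
proof
  assume "mt_loop_homotopic A g h"
  then show "homotopic_paths (mt_points A) (MT A \<circ> g) (MT A \<circ> h)"
    unfolding loop_homotopic_def homotopic_paths_def
    by (rule homotopic_with_compose_continuous_map_left[OF _ continuous_map_MT])
       (use g in \<open>auto simp: loops_at_def pathstart_def pathfinish_def\<close>)
next
  assume "homotopic_paths (mt_points A) (MT A \<circ> g) (MT A \<circ> h)"
  then have "homotopic_with (\<lambda>j. j 0 = mt_class A (0, 0) \<and> j 1 = mt_class A (0, 0))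
      (top_of_set {0..1}) (mapping_torus A) (mt_set \<circ> (MT A \<circ> g)) (mt_set \<circ> (MT A \<circ> h))"
    unfolding homotopic_paths_def
    by (rule homotopic_with_compose_continuous_map_left[OF _ continuous_map_mt_set])
       (use g in \<open>auto simp: loops_at_def pathstart_def pathfinish_def\<close>)
  then show "mt_loop_homotopic A g h"
    by (simp add: loop_homotopic_def o_def)
qed

definition is_mt_lift ::
    "int^'n^'n \<Rightarrow> (real \<Rightarrow> ((real^'n) \<times> real) set) \<Rightarrow> (real \<Rightarrow> (real^'n) \<times> real) \<Rightarrow> bool" where
  "is_mt_lift A g l \<longleftrightarrow> path l \<and> l 0 = (0, 0) \<and> (\<forall>t\<in>{0..1}. mt_cover A (l t) = MT A (g t))"

definition mt_lift_end :: "int^'n^'n \<Rightarrow> (real \<Rightarrow> ((real^'n) \<times> real) set) \<Rightarrow> (real^'n) \<times> real" where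
  "mt_lift_end A g = (SOME e. \<exists>l. is_mt_lift A g l \<and> l 1 = e)"

lemma mt_cover_origin: "mt_cover A (0, 0) = MT A (mt_class A (0, 0))"
  by (simp add: mt_cover_def mt_proj_def)

lemma ex_mt_lift:
  assumes A: "SL_int A" and g: "g \<in> mt_loops A"
  obtains l where "is_mt_lift A g l"
proof -
  have g': "path (MT A \<circ> g)" "path_image (MT A \<circ> g) \<subseteq> mt_points A"
    "(MT A \<circ> g) 0 = mt_cover A (0, 0)"
    using g by (auto simp: mt_loops_iff mt_cover_origin)
  obtain l where "path l" "path_image l \<subseteq> UNIV" "l 0 = (0, 0)"
    "\<And>t. t \<in> {0..1} \<Longrightarrow> mt_cover A (l t) = (MT A \<circ> g) t"
    by (rule covering_space_lift_path_gen[OF covering_space_mt_cover[OF A] _ g']) auto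
  then have "is_mt_lift A g l"
    by (auto simp: is_mt_lift_def)
  then show ?thesis by (rule that)
qed

lemma mt_lift_end_eq_if_homotopic:
  assumes A: "SL_int A" and g: "g \<in> mt_loops A" and h: "h \<in> mt_loops A"
    and hom: "homotopic_paths (mt_points A) (MT A \<circ> g) (MT A \<circ> h)"
    and l1: "is_mt_lift A g l1" and l2: "is_mt_lift A h l2"
  shows "l1 1 = l2 1"
  by (rule covering_space_monodromy_gen[OF covering_space_mt_cover[OF A] hom])
     (use l1 l2 in \<open>auto simp: is_mt_lift_def\<close>)

lemma mt_lift_end_eq:
  assumes A: "SL_int A" and g: "g \<in> mt_loops A" and l: "is_mt_lift A g l"
  shows "mt_lift_end A g = l 1"
proof -
  obtain l' where l': "is_mt_lift A g l'" "l' 1 = mt_lift_end A g"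
    using someI_ex[of "\<lambda>e. \<exists>l. is_mt_lift A g l \<and> l 1 = e"] l
    unfolding mt_lift_end_def by blast
  have "homotopic_paths (mt_points A) (MT A \<circ> g) (MT A \<circ> g)"
    using g by (simp add: mt_loops_iff)
  then show ?thesis
    using mt_lift_end_eq_if_homotopic[OF A g g _ l'(1) l] l'(2) by simp
qed

lemma mt_lift_end_homotopic:
  assumes A: "SL_int A" and g: "g \<in> mt_loops A" and h: "h \<in> mt_loops A"
    and hom: "mt_loop_homotopic A g h"
  shows "mt_lift_end A g = mt_lift_end A h"
proof -
  obtain l1 l2 where l: "is_mt_lift A g l1" "is_mt_lift A h l2"
    using ex_mt_lift[OF A g] ex_mt_lift[OF A h] by metis
  then show ?thesis
    using mt_lift_end_eq_if_homotopic[OF A g h _ l] hom mt_loop_homotopic_iff[OF g h]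
      mt_lift_end_eq[OF A g l(1)] mt_lift_end_eq[OF A h l(2)]
    by simp
qed

text \<open>Conversely, loops whose lifts end at the same point are homotopic: the universal cover is
  contractible, so the two lifts are homotopic, and hence so are their projections.\<close>
lemma mt_loop_homotopic_if_mt_lift_end_eq:
  assumes A: "SL_int A" and g: "g \<in> mt_loops A" and h: "h \<in> mt_loops A"
    and eq: "mt_lift_end A g = mt_lift_end A h"
  shows "mt_loop_homotopic A g h"
proof -
  obtain l1 l2 where l: "is_mt_lift A g l1" "is_mt_lift A h l2"
    using ex_mt_lift[OF A g] ex_mt_lift[OF A h] by metis
  have "l1 1 = l2 1"
    using eq mt_lift_end_eq[OF A g l(1)] mt_lift_end_eq[OF A h l(2)] by simp
  then have "homotopic_paths UNIV l1 l2"
    using l by (intro homotopic_paths_linear) (auto simp: is_mt_lift_def pathstart_def pathfinish_def)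
  then have h1: "homotopic_paths (mt_points A) (mt_cover A \<circ> l1) (mt_cover A \<circ> l2)"
    using mt_cover_image[OF A]
    by (intro homotopic_paths_continuous_image[OF _ continuous_mt_cover[OF A]]) auto
  have pq: "path (mt_cover A \<circ> l1)" "path_image (mt_cover A \<circ> l1) \<subseteq> mt_points A"
    "path (mt_cover A \<circ> l2)" "path_image (mt_cover A \<circ> l2) \<subseteq> mt_points A"
    using homotopic_paths_imp_path[OF h1] homotopic_paths_imp_subset[OF h1] by auto
  have "homotopic_paths (mt_points A) (MT A \<circ> g) (mt_cover A \<circ> l1)"
    by (rule homotopic_paths_sym, rule homotopic_paths_eq[OF pq(1,2)])
       (use l in \<open>auto simp: is_mt_lift_def\<close>)
  also have "homotopic_paths (mt_points A) \<dots> (mt_cover A \<circ> l2)" by (rule h1)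
  also have "homotopic_paths (mt_points A) \<dots> (MT A \<circ> h)"
    by (rule homotopic_paths_eq[OF pq(3,4)]) (use l in \<open>auto simp: is_mt_lift_def\<close>)
  finally show ?thesis
    using mt_loop_homotopic_iff[OF g h] by simp
qed

lemma mt_lift_end_in_fibre:
  assumes A: "SL_int A" and g: "g \<in> mt_loops A"
  obtains v m where "v \<in> int_lattice" "mt_lift_end A g = (v, of_int m)"
proof -
  obtain l where l: "is_mt_lift A g l" using ex_mt_lift[OF A g] by blast
  have "mt_cover A (0, 0) = mt_cover A (l 1)"
    using l g by (auto simp: is_mt_lift_def mt_loops_iff mt_cover_origin)
  then obtain v m where "v \<in> int_lattice" "l 1 = deck A (v, m) (0, 0)"
    using mt_cover_eq_imp_deck[OF A] by blast
  then show ?thesis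
    using that mt_lift_end_eq[OF A g l] by (simp add: deck_def)
qed

lemma mt_lift_end_surj:
  fixes A :: "int^'n^'n"
  assumes A: "SL_int A" and v: "v \<in> int_lattice"
  obtains g where "g \<in> mt_loops A" "mt_lift_end A g = (v, of_int m)"
proof -
  define l where "l = linepath (0::(real^'n) \<times> real) (v, of_int m)"
  define g where "g t = mt_proj A (l t)" for t
  have pl: "path l" by (simp add: l_def)
  have "MT A \<circ> g = mt_cover A \<circ> l"
    by (simp add: g_def mt_cover_def fun_eq_iff)
  moreover have "path (mt_cover A \<circ> l)"
    using pl unfolding path_def comp_def
    by (rule continuous_on_compose2[OF continuous_mt_cover[OF A]]) simp
  moreover have "path_image (mt_cover A \<circ> l) \<subseteq> mt_points A"
    using mt_cover_image[OF A] by (auto simp: path_image_def)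
  moreover have "g 1 = mt_class A (0, 0)"
  proof -
    have "g 1 = mt_proj A (deck A (v, m) (0, 0))"
      by (simp add: g_def l_def linepath_def deck_def)
    also have "\<dots> = mt_proj A (0, 0)"
      by (rule mt_proj_deck[OF A v])
    finally show ?thesis by (simp add: mt_proj_def)
  qed
  ultimately have gl: "g \<in> mt_loops A"
    by (simp add: mt_loops_iff g_def l_def linepath_def mt_proj_def)
  have "is_mt_lift A g l"
    using pl by (simp add: is_mt_lift_def g_def mt_cover_def l_def linepath_def)
  then show ?thesis
    using that[OF gl] mt_lift_end_eq[OF A gl] by (simp add: l_def linepath_def)
qed

lemma path_join_in_mt_loops:
  assumes g: "g \<in> mt_loops A" and h: "h \<in> mt_loops A"
  shows "path_join g h \<in> mt_loops A"
proof -
  have "MT A \<circ> path_join g h = (MT A \<circ> g) +++ (MT A \<circ> h)"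
    by (simp add: fun_eq_iff path_join_def joinpaths_def)
  moreover have "path ((MT A \<circ> g) +++ (MT A \<circ> h))"
    using g h by (intro path_join_imp) (simp_all add: mt_loops_iff pathstart_def pathfinish_def)
  moreover have "path_image ((MT A \<circ> g) +++ (MT A \<circ> h)) \<subseteq> mt_points A"
    using g h path_image_join_subset[of "MT A \<circ> g" "MT A \<circ> h"] unfolding mt_loops_iff by blast
  ultimately show ?thesis
    using g h by (simp add: mt_loops_iff path_join_def)
qed

text \<open>Lifting \<open>path_join g h\<close> means lifting \<open>g\<close> and then the image of the lift of \<open>h\<close>
  under the deck transformation taking the origin to the end of the first lift.\<close>
lemma mt_lift_end_path_join:
  assumes A: "SL_int A" and g: "g \<in> mt_loops A" and h: "h \<in> mt_loops A"
    and v: "v \<in> int_lattice" and lg: "mt_lift_end A g = (v, of_int m)"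
  shows "mt_lift_end A (path_join g h) = deck A (v, m) (mt_lift_end A h)"
proof -
  obtain l1 l2 where l: "is_mt_lift A g l1" "is_mt_lift A h l2"
    using ex_mt_lift[OF A g] ex_mt_lift[OF A h] by metis
  have l11: "l1 1 = (v, of_int m)" using mt_lift_end_eq[OF A g l(1)] lg by simp
  have p1: "path l1" "l1 0 = (0, 0)" "\<And>t. t \<in> {0..1} \<Longrightarrow> mt_cover A (l1 t) = MT A (g t)"
    and p2: "path l2" "l2 0 = (0, 0)" "\<And>t. t \<in> {0..1} \<Longrightarrow> mt_cover A (l2 t) = MT A (h t)"
    using l by (auto simp: is_mt_lift_def)
  define l where "l = l1 +++ (deck A (v, m) \<circ> l2)"
  have "path (deck A (v, m) \<circ> l2)"
    using p2(1) unfolding path_def comp_def by (rule continuous_on_compose2[OF continuous_deck[of UNIV]]) simp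
  then have "path l"
    unfolding l_def by (rule path_join_imp[OF p1(1)]) (simp add: pathstart_def pathfinish_def l11 p2(2) deck_def)
  moreover have "mt_cover A (l t) = MT A (path_join g h t)" if "t \<in> {0..1}" for t
    using that p1(3)[of "2 * t"] p2(3)[of "2 * t - 1"] mt_cover_deck[OF A v]
    by (simp add: l_def joinpaths_def path_join_def)
  ultimately have "is_mt_lift A (path_join g h) l"
    by (simp add: is_mt_lift_def l_def joinpaths_def p1(2))
  then have "mt_lift_end A (path_join g h) = l 1"
    by (rule mt_lift_end_eq[OF A path_join_in_mt_loops[OF g h]])
  also have "\<dots> = deck A (v, m) (mt_lift_end A h)"
    using mt_lift_end_eq[OF A h l(2)] by (simp add: l_def joinpaths_def)
  finally show ?thesis .
qed

lemma loop_homotopic_refl: "g \<in> loops_at X x0 \<Longrightarrow> loop_homotopic X x0 g g"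
  by (simp add: loop_homotopic_def loops_at_def pathin_def)

lemma loop_homotopic_sym: "loop_homotopic X x0 g h \<Longrightarrow> loop_homotopic X x0 h g"
  unfolding loop_homotopic_def by (rule homotopic_with_symD)

lemma loop_homotopic_trans:
  "loop_homotopic X x0 g h \<Longrightarrow> loop_homotopic X x0 h k \<Longrightarrow> loop_homotopic X x0 g k"
  unfolding loop_homotopic_def by (rule homotopic_with_trans)

lemma loop_class_eq:
  assumes "loop_homotopic X x0 g h"
  shows "loop_class X x0 g = loop_class X x0 h"
  using loop_homotopic_trans[OF loop_homotopic_sym[OF assms]] loop_homotopic_trans[OF assms]
  unfolding loop_class_def by blast

lemma some_in_loop_class:
  assumes "g \<in> loops_at X x0"
  shows "(SOME h. h \<in> loop_class X x0 g) \<in> loops_at X x0"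
    and "loop_homotopic X x0 g (SOME h. h \<in> loop_class X x0 g)"
proof -
  have "g \<in> loop_class X x0 g"
    using assms by (simp add: loop_class_def loop_homotopic_refl)
  then have "(SOME h. h \<in> loop_class X x0 g) \<in> loop_class X x0 g"
    by (rule someI[of "\<lambda>h. h \<in> loop_class X x0 g"])
  then show "(SOME h. h \<in> loop_class X x0 g) \<in> loops_at X x0"
    and "loop_homotopic X x0 g (SOME h. h \<in> loop_class X x0 g)"
    by (simp_all add: loop_class_def)
qed

lemma carrier_fundamental_group:
  "carrier (fundamental_group X x0) = loop_class X x0 ` loops_at X x0"
  by (simp add: fundamental_group_def)

lemma mult_fundamental_group:
  "C \<otimes>\<^bsub>fundamental_group X x0\<^esub> D = loop_class X x0 (path_join (SOME p. p \<in> C) (SOME q. q \<in> D))"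
  by (simp add: fundamental_group_def)

lemma some_in_fundamental_group:
  assumes "C \<in> carrier (fundamental_group X x0)"
  shows "(SOME g. g \<in> C) \<in> loops_at X x0" "C = loop_class X x0 (SOME g. g \<in> C)"
proof -
  obtain g where g: "g \<in> loops_at X x0" "C = loop_class X x0 g"
    using assms by (auto simp: carrier_fundamental_group)
  then show "(SOME g. g \<in> C) \<in> loops_at X x0" "C = loop_class X x0 (SOME g. g \<in> C)"
    using some_in_loop_class[OF g(1)] loop_class_eq[OF some_in_loop_class(2)[OF g(1)]] by simp_all
qed

text \<open>The semidirect product \<open>\<int>^k \<rtimes>\<^sub>A \<int>\<close>, written so that \<open>x \<otimes> y\<close> corresponds to the composite
  \<open>deck A x \<circ> deck A y\<close> of deck transformations.\<close>
definition lattice_sdp :: "int^'n^'n \<Rightarrow> ((real^'n) \<times> int) monoid" where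
  "lattice_sdp A =
     \<lparr>carrier = int_lattice \<times> UNIV,
      mult = (\<lambda>x y. (mat_zpow (real_mat A) (- snd x) *v fst y + fst x, snd x + snd y)),
      one = (0, 0)\<rparr>"

lemma carrier_lattice_sdp [simp]: "carrier (lattice_sdp A) = int_lattice \<times> UNIV"
  by (simp add: lattice_sdp_def)

lemma mult_lattice_sdp [simp]:
  "(v, m) \<otimes>\<^bsub>lattice_sdp A\<^esub> (w, n) = (mat_zpow (real_mat A) (- m) *v w + v, m + n)"
  by (simp add: lattice_sdp_def)

definition mt_lift_coord :: "int^'n^'n \<Rightarrow> (real \<Rightarrow> ((real^'n) \<times> real) set) \<Rightarrow> (real^'n) \<times> int" where
  "mt_lift_coord A g = (fst (mt_lift_end A g), \<lfloor>snd (mt_lift_end A g)\<rfloor>)"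

definition pi1_coord :: "int^'n^'n \<Rightarrow> (real \<Rightarrow> ((real^'n) \<times> real) set) set \<Rightarrow> (real^'n) \<times> int" where
  "pi1_coord A C = mt_lift_coord A (SOME g. g \<in> C)"

lemma mt_lift_end_coord:
  assumes A: "SL_int A" and g: "g \<in> mt_loops A"
  shows "mt_lift_end A g = (fst (mt_lift_coord A g), of_int (snd (mt_lift_coord A g)))"
    and "mt_lift_coord A g \<in> int_lattice \<times> UNIV"
  using mt_lift_end_in_fibre[OF A g] by (metis fst_conv snd_conv floor_of_int mem_Times_iff
      mt_lift_coord_def UNIV_I)+

lemma pi1_coord_loop_class:
  assumes A: "SL_int A" and g: "g \<in> mt_loops A"
  shows "pi1_coord A (mt_loop_class A g) = mt_lift_coord A g"
  using some_in_loop_class[OF g] mt_lift_end_homotopic[OF A g]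
  by (simp add: pi1_coord_def mt_lift_coord_def)

lemma bij_betw_pi1_coord:
  assumes A: "SL_int A"
  shows "bij_betw (pi1_coord A) (carrier (pi1_mapping_torus A)) (int_lattice \<times> UNIV)"
  unfolding bij_betw_def
proof (intro conjI)
  show "inj_on (pi1_coord A) (carrier (pi1_mapping_torus A))"
  proof (rule inj_onI)
    fix C D assume "C \<in> carrier (pi1_mapping_torus A)" "D \<in> carrier (pi1_mapping_torus A)"
      and eq: "pi1_coord A C = pi1_coord A D"
    then obtain g h where g: "g \<in> mt_loops A" "C = mt_loop_class A g"
      and h: "h \<in> mt_loops A" "D = mt_loop_class A h"
      by (auto simp: pi1_mapping_torus_def carrier_fundamental_group)
    have "mt_lift_end A g = mt_lift_end A h"
      using eq mt_lift_end_coord(1)[OF A g(1)] mt_lift_end_coord(1)[OF A h(1)]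
      by (simp add: g h pi1_coord_loop_class[OF A])
    then show "C = D"
      using g h loop_class_eq mt_loop_homotopic_if_mt_lift_end_eq[OF A g(1) h(1)] by simp
  qed
  show "pi1_coord A ` carrier (pi1_mapping_torus A) = int_lattice \<times> UNIV"
  proof (intro subset_antisym subsetI)
    fix x assume "x \<in> pi1_coord A ` carrier (pi1_mapping_torus A)"
    then show "x \<in> int_lattice \<times> UNIV"
      using pi1_coord_loop_class[OF A] mt_lift_end_coord(2)[OF A]
      by (auto simp: pi1_mapping_torus_def carrier_fundamental_group)
  next
    fix x :: "(real^'a) \<times> int" assume "x \<in> int_lattice \<times> UNIV"
    then obtain v m where x: "x = (v, m)" "v \<in> int_lattice" by auto
    then obtain g where g: "g \<in> mt_loops A" "mt_lift_end A g = (v, of_int m)"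
      using mt_lift_end_surj[OF A] by metis
    then have "pi1_coord A (mt_loop_class A g) = x"
      by (simp add: pi1_coord_loop_class[OF A] mt_lift_coord_def x)
    then show "x \<in> pi1_coord A ` carrier (pi1_mapping_torus A)"
      using g(1) by (auto simp: pi1_mapping_torus_def carrier_fundamental_group)
  qed
qed

lemma pi1_mapping_torus_mult_closed:
  assumes "C \<in> carrier (pi1_mapping_torus A)" "D \<in> carrier (pi1_mapping_torus A)"
  shows "C \<otimes>\<^bsub>pi1_mapping_torus A\<^esub> D \<in> carrier (pi1_mapping_torus A)"
proof -
  have "path_join (SOME p. p \<in> C) (SOME q. q \<in> D) \<in> mt_loops A"
    using assms[unfolded pi1_mapping_torus_def]
    by (intro path_join_in_mt_loops some_in_fundamental_group(1))
  then show ?thesis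
    by (simp add: pi1_mapping_torus_def mult_fundamental_group carrier_fundamental_group)
qed

lemma pi1_coord_mult:
  assumes A: "SL_int A" and C: "C \<in> carrier (pi1_mapping_torus A)"
    and D: "D \<in> carrier (pi1_mapping_torus A)"
  shows "pi1_coord A (C \<otimes>\<^bsub>pi1_mapping_torus A\<^esub> D) =
    pi1_coord A C \<otimes>\<^bsub>lattice_sdp A\<^esub> pi1_coord A D"
proof -
  define g h where "g = (SOME g. g \<in> C)" and "h = (SOME g. g \<in> D)"
  have g: "g \<in> mt_loops A" and h: "h \<in> mt_loops A"
    using some_in_fundamental_group(1) C D by (simp_all add: g_def h_def pi1_mapping_torus_def)
  obtain v m v' m' where vm: "mt_lift_coord A g = (v, m)" and vm': "mt_lift_coord A h = (v', m')"
    by fastforce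
  have lg: "mt_lift_end A g = (v, of_int m)" "v \<in> int_lattice"
    using mt_lift_end_coord[OF A g] vm by auto
  have lh: "mt_lift_end A h = (v', of_int m')"
    using mt_lift_end_coord[OF A h] vm' by auto
  have "C \<otimes>\<^bsub>pi1_mapping_torus A\<^esub> D = mt_loop_class A (path_join g h)"
    by (simp add: pi1_mapping_torus_def mult_fundamental_group g_def h_def)
  then have "pi1_coord A (C \<otimes>\<^bsub>pi1_mapping_torus A\<^esub> D) = mt_lift_coord A (path_join g h)"
    using pi1_coord_loop_class[OF A path_join_in_mt_loops[OF g h]] by simp
  also have "\<dots> = (fst (deck A (v, m) (v', of_int m')), \<lfloor>snd (deck A (v, m) (v', of_int m'))\<rfloor>)"
    using mt_lift_end_path_join[OF A g h lg(2) lg(1)] by (simp add: mt_lift_coord_def lh)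
  also have "\<dots> = pi1_coord A C \<otimes>\<^bsub>lattice_sdp A\<^esub> pi1_coord A D"
    by (simp add: pi1_coord_def g_def[symmetric] h_def[symmetric] vm vm' deck_def add.commute)
  finally show ?thesis .
qed

theorem pi1_coord_iso:
  "SL_int A \<Longrightarrow> pi1_coord A \<in> iso (pi1_mapping_torus A) (lattice_sdp A)"
  using bij_betw_pi1_coord pi1_coord_mult
  by (auto simp: iso_def hom_def bij_betw_def)

text \<open>The library's \<open>iso_set_sym\<close> assumes a group; closure under multiplication suffices.\<close>
lemma iso_set_sym_closed:
  assumes h: "h \<in> iso G H"
    and closed: "\<And>x y. x \<in> carrier G \<Longrightarrow> y \<in> carrier G \<Longrightarrow> x \<otimes>\<^bsub>G\<^esub> y \<in> carrier G"
  shows "inv_into (carrier G) h \<in> iso H G"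
proof -
  have hom: "h \<in> hom G H" and bij: "bij_betw h (carrier G) (carrier H)"
    using h by (auto simp: iso_def)
  have inv: "bij_betw (inv_into (carrier G) h) (carrier H) (carrier G)"
    by (rule bij_betw_inv_into[OF bij])
  have "inv_into (carrier G) h \<in> hom H G"
  proof (rule homI)
    show "inv_into (carrier G) h x \<in> carrier G" if "x \<in> carrier H" for x
      using inv that by (meson bij_betwE)
    then show "inv_into (carrier G) h (x \<otimes>\<^bsub>H\<^esub> y) =
        inv_into (carrier G) h x \<otimes>\<^bsub>G\<^esub> inv_into (carrier G) h y"
      if "x \<in> carrier H" "y \<in> carrier H" for x y
      using that bij hom closed
      by (intro inv_into_f_eq) (auto simp: bij_betw_def hom_mult bij_betw_inv_into_right)
  qed
  then show ?thesis
    using inv by (simp add: iso_def)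
qed

lemma lattice_sdp_iso_if_pi1_iso:
  assumes A: "SL_int A" and B: "SL_int B"
    and "pi1_mapping_torus A \<cong> pi1_mapping_torus B"
  shows "lattice_sdp A \<cong> lattice_sdp B"
proof -
  obtain \<phi> where "\<phi> \<in> iso (pi1_mapping_torus A) (pi1_mapping_torus B)"
    using assms(3) by (auto simp: is_iso_def)
  moreover have "inv_into (carrier (pi1_mapping_torus A)) (pi1_coord A)
      \<in> iso (lattice_sdp A) (pi1_mapping_torus A)"
    by (rule iso_set_sym_closed[OF pi1_coord_iso[OF A] pi1_mapping_torus_mult_closed])
  ultimately show ?thesis
    using pi1_coord_iso[OF B] by (meson is_isoI iso_set_trans)
qed


section \<open>Isomorphisms between the groups \<open>\<int>^k \<rtimes> \<int>\<close>\<close>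

lemma additive_int_lattice_int_scale:
  fixes F :: "real^'n \<Rightarrow> 'b::real_vector"
  assumes add: "\<And>x y. x \<in> int_lattice \<Longrightarrow> y \<in> int_lattice \<Longrightarrow> F (x + y) = F x + F y"
    and v: "v \<in> int_lattice"
  shows "F (of_int k *s v) = of_int k *\<^sub>R F v"
proof -
  have F0: "F 0 = 0" using add[of 0 0] by simp
  have nat: "F (of_nat n *s v) = of_nat n *\<^sub>R F v" for n
  proof (induction n)
    case (Suc n)
    have "F (of_nat (Suc n) *s v) = F (of_nat n *s v + v)"
      by (simp add: vector_sadd_rdistrib add.commute)
    also have "\<dots> = F (of_nat n *s v) + F v"
      using v by (intro add) auto
    finally show ?case
      using Suc by (simp add: scaleR_add_left)
  qed (simp add: F0)
  have "F (- x) = - F x" if "x \<in> int_lattice" for x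
    using add[of x "- x"] that F0 by (simp add: eq_neg_iff_add_eq_0 add.commute int_lattice_minus)
  then show ?thesis
    using nat[of "nat \<bar>k\<bar>"] v
    by (cases "0 \<le> k") (auto simp: vector_smult_lneg int_lattice_scale)
qed

lemma additive_int_lattice_matrix:
  assumes add: "\<And>x y. x \<in> int_lattice \<Longrightarrow> y \<in> int_lattice \<Longrightarrow> F (x + y) = F x + F y"
  obtains M :: "real^'n^'m" where "\<And>v. v \<in> (int_lattice :: (real^'n) set) \<Longrightarrow> M *v v = F v"
proof
  define M :: "real^'n^'m" where "M = (\<chi> i j. F (axis j 1) $ i)"
  fix v :: "real^'n" assume v: "v \<in> int_lattice"
  have F0: "F 0 = 0" using add[of 0 0] by simp
  have Fsum: "F (\<Sum>j\<in>S. g j) = (\<Sum>j\<in>S. F (g j))"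
    if "finite S" "\<And>j. g j \<in> int_lattice" for S and g :: "'n \<Rightarrow> real^'n"
    using that(1) by (induction S rule: finite_induct) (simp_all add: F0 add that(2) int_lattice_sum)
  have scale: "F ((v $ j) *s axis j 1) = (v $ j) *s F (axis j 1)" for j
  proof -
    obtain k where "v $ j = of_int k"
      using v by (auto simp: int_lattice_iff elim: Ints_cases)
    then show ?thesis
      using additive_int_lattice_int_scale[OF add axis_in_int_lattice, of k j]
      by (simp add: scalar_mult_eq_scaleR)
  qed
  have "M *v v = (\<Sum>j\<in>UNIV. (v $ j) *s F (axis j 1))"
    by (simp add: matrix_mult_sum column_def M_def)
  also have "\<dots> = (\<Sum>j\<in>UNIV. F ((v $ j) *s axis j 1))"
    by (simp add: scale)
  also have "\<dots> = F (\<Sum>j\<in>UNIV. (v $ j) *s axis j 1)"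
    using v by (intro Fsum[symmetric]) (auto simp: int_lattice_iff axis_def)
  also have "(\<Sum>j\<in>UNIV. (v $ j) *s axis j 1) = v"
  proof -
    have "column j (mat 1 :: real^'n^'n) = axis j 1" for j
      by (simp add: column_def mat_def axis_def vec_eq_iff)
    then show ?thesis
      using matrix_mult_sum[of "mat 1 :: real^'n^'n" v] by simp
  qed
  finally show "M *v v = F v" .
qed

lemma matrix_eq_on_axes:
  fixes M N :: "real^'n^'m"
  assumes "\<And>j. M *v axis j 1 = N *v axis j 1"
  shows "M = N"
  using assms by (simp add: matrix_vector_mult_basis column_def vec_eq_iff)

lemma additive_bij_int_lattice_matrix:
  fixes F :: "real^'n \<Rightarrow> real^'n"
  assumes add: "\<And>x y. x \<in> int_lattice \<Longrightarrow> y \<in> int_lattice \<Longrightarrow> F (x + y) = F x + F y"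
    and bij: "bij_betw F int_lattice int_lattice"
  obtains M where "invertible M" "\<And>v. v \<in> int_lattice \<Longrightarrow> M *v v = F v"
proof -
  define G where "G = inv_into int_lattice F"
  have G: "G u \<in> int_lattice" "F (G u) = u" if "u \<in> int_lattice" for u
    using that bij unfolding G_def bij_betw_def by (auto intro: inv_into_into f_inv_into_f)
  have GF: "G (F v) = v" if "v \<in> int_lattice" for v
    using that bij unfolding G_def bij_betw_def by simp
  have "G (x + y) = G x + G y" if "x \<in> int_lattice" "y \<in> int_lattice" for x y
    using GF[of "G x + G y"] add[of "G x" "G y"] G that by auto
  then obtain N :: "real^'n^'n" where N: "\<And>v. v \<in> int_lattice \<Longrightarrow> N *v v = G v"
    using additive_int_lattice_matrix by metis
  obtain M :: "real^'n^'n" where M: "\<And>v. v \<in> int_lattice \<Longrightarrow> M *v v = F v"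
    using additive_int_lattice_matrix[OF add] by metis
  have "M ** N = mat 1"
    by (rule matrix_eq_on_axes) (simp add: matrix_vector_mul_assoc[symmetric] M N G)
  then have "invertible M"
    using invertible_right_inverse by blast
  then show ?thesis
    using that M by blast
qed

text \<open>Such an \<open>f\<close> kills the image of \<open>M - 1\<close>, which contains a nonzero multiple of every
  lattice vector.\<close>
lemma additive_invariant_vanishes:
  fixes f :: "real^'n \<Rightarrow> real"
  assumes M: "integral_mat M" "det (M - mat 1) \<noteq> 0"
    and add: "\<And>x y. x \<in> int_lattice \<Longrightarrow> y \<in> int_lattice \<Longrightarrow> f (x + y) = f x + f y"
    and inv: "\<And>v. v \<in> int_lattice \<Longrightarrow> f (M *v v) = f v"
    and v: "v \<in> int_lattice"
  shows "f v = 0"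
proof -
  have iM: "integral_mat (M - mat 1)"
    using M(1) by (intro integral_mat_diff integral_mat_one)
  obtain u where u: "u \<in> int_lattice" "(M - mat 1) *v u = det (M - mat 1) *s v"
    using int_lattice_det_scale_in_image[OF iM v] by blast
  obtain d where d: "det (M - mat 1) = of_int d"
    using det_integral_mat[OF iM] by (auto elim: Ints_cases)
  have Mu: "(M - mat 1) *v u \<in> int_lattice"
    using iM u(1) by blast
  have "f (M *v u) = f ((M - mat 1) *v u) + f u"
    using add[OF Mu u(1)] by (simp add: matrix_vector_mult_diff_rdistrib)
  then have "f ((M - mat 1) *v u) = 0"
    using inv[OF u(1)] by simp
  then have "of_int d * f v = 0"
    using additive_int_lattice_int_scale[OF add v, of d] u(2) d by simp
  then show ?thesis
    using M(2) d by simp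
qed

lemma det_real_mat_minus_1_nonzero:
  assumes "\<not> has_eigenvalue_one A"
  shows "det (real_mat A - mat 1) \<noteq> 0"
proof
  assume "det (real_mat A - mat 1) = 0"
  then obtain z where z: "z \<noteq> 0" "(real_mat A - mat 1) *v z = 0"
    using invertible_det_nz invertible_left_inverse matrix_left_invertible_ker by metis
  define zc where "zc = (\<chi> i. complex_of_real (z $ i))"
  have "zc \<noteq> 0"
    using z(1) by (simp add: zc_def vec_eq_iff)
  moreover have "(complex_mat A *v zc) $ i = complex_of_real ((real_mat A *v z) $ i)" for i
    by (simp add: complex_mat_def real_mat_def matrix_vector_mult_def zc_def)
  then have "complex_mat A *v zc = zc"
    using z(2) by (simp add: vec_eq_iff zc_def matrix_vector_mult_diff_rdistrib)
  ultimately show False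
    using assms unfolding has_eigenvalue_one_def by blast
qed

locale lattice_sdp_iso =
  fixes A B :: "int^'n^'n" and \<Psi> :: "(real^'n) \<times> int \<Rightarrow> (real^'n) \<times> int"
  assumes SL_A: "SL_int A" and SL_B: "SL_int B"
    and iso: "\<Psi> \<in> iso (lattice_sdp A) (lattice_sdp B)"
begin

lemma \<Psi>_mult:
  assumes "x \<in> int_lattice \<times> UNIV" "y \<in> int_lattice \<times> UNIV"
  shows "\<Psi> (x \<otimes>\<^bsub>lattice_sdp A\<^esub> y) = \<Psi> x \<otimes>\<^bsub>lattice_sdp B\<^esub> \<Psi> y"
proof -
  have "\<Psi> \<in> hom (lattice_sdp A) (lattice_sdp B)"
    using iso by (simp add: iso_def)
  then show ?thesis
    using assms by (intro hom_mult) simp_all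
qed

lemma \<Psi>_bij: "bij_betw \<Psi> (int_lattice \<times> UNIV) (int_lattice \<times> UNIV)"
  using iso by (simp add: iso_def)

definition height :: "(real^'n) \<times> int \<Rightarrow> int" where
  "height x = snd (\<Psi> x)"

lemma height_mult:
  "x \<in> int_lattice \<times> UNIV \<Longrightarrow> y \<in> int_lattice \<times> UNIV \<Longrightarrow>
    height (x \<otimes>\<^bsub>lattice_sdp A\<^esub> y) = height x + height y"
  using \<Psi>_mult by (simp add: height_def lattice_sdp_def)

lemma height_lattice:
  assumes A: "\<not> has_eigenvalue_one A" and v: "v \<in> int_lattice"
  shows "height (v, 0) = 0"
proof -
  define f where "f w = real_of_int (height (w, 0))" for w
  have add: "f (x + y) = f x + f y" if "x \<in> int_lattice" "y \<in> int_lattice" for x y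
    using height_mult[of "(x, 0)" "(y, 0)"] that by (simp add: f_def add.commute)
  have "f (real_mat A *v w) = f w" if w: "w \<in> int_lattice" for w
  proof -
    let ?Aw = "real_mat A *v w"
    have Aw: "?Aw \<in> int_lattice"
      using w by (intro int_lattice_mat_mult integral_mat_real_mat)
    have "(w, 0) \<otimes>\<^bsub>lattice_sdp A\<^esub> (0, 1) = (0, 1) \<otimes>\<^bsub>lattice_sdp A\<^esub> (?Aw, 0)"
      by (simp add: matrix_vector_mul_assoc matrix_inv_left[OF invertible_real_mat[OF SL_A]])
    then show ?thesis
      using height_mult[of "(w, 0)" "(0, 1)"] height_mult[of "(0, 1)" "(?Aw, 0)"] w Aw
      by (simp add: f_def)
  qed
  then show ?thesis
    using additive_invariant_vanishes[OF integral_mat_real_mat det_real_mat_minus_1_nonzero[OF A]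
        add _ v]
    by (simp add: f_def)
qed

lemma height_eq:
  assumes A: "\<not> has_eigenvalue_one A" and v: "v \<in> int_lattice"
  shows "height (v, m) = m * height (0, 1)"
proof -
  have h0: "height (0, m) = m * height (0, 1)" for m
  proof (induction m rule: int_induct[where k = 0])
    case base
    then show ?case using height_lattice[OF A] by simp
  next
    case (step1 i)
    then show ?case
      using height_mult[of "(0, 1)" "(0, i)"] by (simp add: add.commute distrib_right)
  next
    case (step2 i)
    then show ?case
      using height_mult[of "(0, 1)" "(0, i - 1)"] by (simp add: algebra_simps)
  qed
  show ?thesis
    using height_mult[of "(v, 0)" "(0, m)"] height_lattice[OF A v] h0[of m] v by simp
qed

lemma height_generator:
  assumes A: "\<not> has_eigenvalue_one A"
  shows "height (0, 1) = 1 \<or> height (0, 1) = -1"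
proof -
  have "(0, 1) \<in> \<Psi> ` (int_lattice \<times> UNIV)"
    using \<Psi>_bij by (simp add: bij_betw_def)
  then obtain v m where v: "v \<in> int_lattice" and "\<Psi> (v, m) = (0, 1)"
    by auto
  then have "m * height (0, 1) = 1"
    using height_eq[OF A v, of m] by (simp add: height_def)
  then show ?thesis
    using zmult_eq_1_iff[of m "height (0, 1)"] by auto
qed

definition lattice_part :: "real^'n \<Rightarrow> real^'n" where
  "lattice_part v = fst (\<Psi> (v, 0))"

lemma \<Psi>_lattice:
  assumes A: "\<not> has_eigenvalue_one A" and v: "v \<in> int_lattice"
  shows "\<Psi> (v, 0) = (lattice_part v, 0)" "lattice_part v \<in> int_lattice"
  using height_lattice[OF A v] \<Psi>_bij v
  by (auto simp: lattice_part_def height_def bij_betw_def prod_eq_iff)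

lemma lattice_part_add:
  assumes A: "\<not> has_eigenvalue_one A" and "x \<in> int_lattice" "y \<in> int_lattice"
  shows "lattice_part (x + y) = lattice_part x + lattice_part y"
proof -
  have "\<Psi> (x + y, 0) = (lattice_part x + lattice_part y, 0)"
    using \<Psi>_mult[of "(y, 0)" "(x, 0)"] \<Psi>_lattice[OF A] assms(2,3) by simp
  moreover have "\<Psi> (x + y, 0) = (lattice_part (x + y), 0)"
    using \<Psi>_lattice(1)[OF A] assms(2,3) by blast
  ultimately show ?thesis by simp
qed

lemma bij_lattice_part:
  assumes A: "\<not> has_eigenvalue_one A"
  shows "bij_betw lattice_part int_lattice int_lattice"
  unfolding bij_betw_def
proof
  show "inj_on lattice_part int_lattice"
    using \<Psi>_bij \<Psi>_lattice[OF A] by (auto simp: inj_on_def bij_betw_def) (metis prod.inject)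
  show "lattice_part ` int_lattice = int_lattice"
  proof (intro subset_antisym subsetI)
    fix u :: "real^'n" assume "u \<in> int_lattice"
    then have "(u, 0) \<in> \<Psi> ` (int_lattice \<times> UNIV)"
      using \<Psi>_bij by (simp add: bij_betw_def)
    then obtain v m where vm: "v \<in> int_lattice" "\<Psi> (v, m) = (u, 0)"
      by auto
    then have "m = 0"
      using height_eq[OF A vm(1), of m] height_generator[OF A] by (auto simp: height_def)
    then show "u \<in> lattice_part ` int_lattice"
      using vm \<Psi>_lattice[OF A] by force
  qed (use \<Psi>_lattice[OF A] in auto)
qed

text \<open>With \<open>t = (0, 1)\<close> and \<open>\<Psi> t = (w, \<epsilon>)\<close>, applying \<open>\<Psi>\<close> to \<open>(v, 0) \<cdot> t = t \<cdot> (A v, 0)\<close>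
  shows that \<open>B^\<epsilon>\<close> is intertwined with \<open>A\<close> by the lattice part of \<open>\<Psi>\<close>.\<close>
lemma lattice_part_intertwines:
  assumes A: "\<not> has_eigenvalue_one A" and v: "v \<in> int_lattice"
  shows "mat_zpow (real_mat B) (height (0, 1)) *v lattice_part v = lattice_part (real_mat A *v v)"
proof -
  let ?Av = "real_mat A *v v" and ?\<epsilon> = "height (0, 1)"
  obtain w where w: "\<Psi> (0, 1) = (w, ?\<epsilon>)"
    by (metis height_def prod.collapse)
  have Av: "?Av \<in> int_lattice"
    using v by (intro int_lattice_mat_mult integral_mat_real_mat)
  have "(v, 0) \<otimes>\<^bsub>lattice_sdp A\<^esub> (0, 1) = (0, 1) \<otimes>\<^bsub>lattice_sdp A\<^esub> (?Av, 0)"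
    by (simp add: matrix_vector_mul_assoc matrix_inv_left[OF invertible_real_mat[OF SL_A]])
  then have "(lattice_part v, 0) \<otimes>\<^bsub>lattice_sdp B\<^esub> (w, ?\<epsilon>) =
      (w, ?\<epsilon>) \<otimes>\<^bsub>lattice_sdp B\<^esub> (lattice_part ?Av, 0)"
    using \<Psi>_mult[of "(v, 0)" "(0, 1)"] \<Psi>_mult[of "(0, 1)" "(?Av, 0)"] v Av
    by (simp add: \<Psi>_lattice[OF A] w)
  then have "lattice_part v = mat_zpow (real_mat B) (- ?\<epsilon>) *v lattice_part ?Av"
    by simp
  then show ?thesis
    by (simp add: mat_zpow_mult_vec[OF invertible_real_mat[OF SL_B]])
qed

theorem real_mat_conjugate:
  assumes A: "\<not> has_eigenvalue_one A"
  obtains P where "invertible P"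
    "real_mat B = P ** real_mat A ** matrix_inv P \<or>
     matrix_inv (real_mat B) = P ** real_mat A ** matrix_inv P"
proof -
  obtain P where P: "invertible P" "\<And>v. v \<in> int_lattice \<Longrightarrow> P *v v = lattice_part v"
    using additive_bij_int_lattice_matrix lattice_part_add[OF A] bij_lattice_part[OF A] by metis
  have "mat_zpow (real_mat B) (height (0, 1)) ** P = P ** real_mat A"
    by (rule matrix_eq_on_axes)
       (simp add: matrix_vector_mul_assoc[symmetric] P lattice_part_intertwines[OF A]
         int_lattice_mat_mult integral_mat_real_mat)
  then have "mat_zpow (real_mat B) (height (0, 1)) = P ** real_mat A ** matrix_inv P"
    by (metis P(1) matrix_inv_right matrix_mul_assoc matrix_mul_rid)
  then show ?thesis
    using that[OF P(1)] height_generator[OF A] by auto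
qed

end


section \<open>Diagonalizability\<close>

definition diagonal_mat :: "'a::zero^'n^'n \<Rightarrow> bool" where
  "diagonal_mat D \<longleftrightarrow> (\<forall>i j. i \<noteq> j \<longrightarrow> D $ i $ j = 0)"

definition diagonalizable_mat :: "'a::field^'n^'n \<Rightarrow> bool" where
  "diagonalizable_mat M \<longleftrightarrow> (\<exists>P D :: 'a^'n^'n. invertible P \<and> diagonal_mat D \<and> M = P ** D ** matrix_inv P)"

lemma diagonalizable_over_C_iff: "diagonalizable_over_C A \<longleftrightarrow> diagonalizable_mat (complex_mat A)"
  by (simp add: diagonalizable_over_C_def diagonalizable_mat_def diagonal_mat_def)

lemma diagonal_mat_mult_left:
  "diagonal_mat D \<Longrightarrow> (D ** X) $ i $ j = D $ i $ i * X $ i $ j"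
  unfolding diagonal_mat_def matrix_matrix_mult_def
  by (simp add: sum.remove[of UNIV i] sum.neutral)

lemma matrix_inv_mult:
  fixes M N :: "'a::field^'n^'n"
  assumes "invertible M" "invertible N"
  shows "matrix_inv (M ** N) = matrix_inv N ** matrix_inv M"
  by (rule matrix_inv_eqI)
     (simp add: matrix_mul_assoc matrix_inv_right[OF assms(2)] matrix_inv_right[OF assms(1)]
       flip: matrix_mul_assoc[of M N])

lemma diagonalizable_mat_conj:
  fixes M Q :: "'a::field^'n^'n"
  assumes Q: "invertible Q" and "diagonalizable_mat M"
  shows "diagonalizable_mat (Q ** M ** matrix_inv Q)"
proof -
  obtain P D :: "'a^'n^'n" where P: "invertible P" "diagonal_mat D" "M = P ** D ** matrix_inv P"
    using assms(2) unfolding diagonalizable_mat_def by blast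
  have "Q ** M ** matrix_inv Q = (Q ** P) ** D ** matrix_inv (Q ** P)"
    by (simp add: P(3) matrix_inv_mult[OF Q P(1)] matrix_mul_assoc)
  then show ?thesis
    using P(1,2) Q invertible_mult unfolding diagonalizable_mat_def by blast
qed

lemma diagonalizable_mat_matrix_inv:
  fixes M :: "'a::field^'n^'n"
  assumes M: "invertible M" and "diagonalizable_mat M"
  shows "diagonalizable_mat (matrix_inv M)"
proof -
  obtain P D :: "'a^'n^'n" where P: "invertible P" and D: "diagonal_mat D"
    and MPD: "M = P ** D ** matrix_inv P"
    using assms(2) unfolding diagonalizable_mat_def by blast
  have "matrix_inv P ** M ** P = (matrix_inv P ** P) ** D ** (matrix_inv P ** P)"
    by (simp add: MPD matrix_mul_assoc)
  then have "D = matrix_inv P ** M ** P"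
    by (simp add: matrix_inv_left[OF P])
  then have "invertible D"
    using M P invertible_matrix_inv invertible_mult by metis
  then have "(D ** matrix_inv D) $ i $ i = 1" for i
    by (simp add: matrix_inv_right mat_def)
  then have Dii: "D $ i $ i \<noteq> 0" for i
    using diagonal_mat_mult_left[OF D] by (metis mult_zero_left zero_neq_one)
  define D' where "D' = (\<chi> i j. if i = j then inverse (D $ i $ i) else 0)"
  have D': "diagonal_mat D'" and DD': "D ** D' = mat 1"
    by (auto simp: diagonal_mat_def D'_def vec_eq_iff diagonal_mat_mult_left[OF D] mat_def Dii)
  have "M ** (P ** D' ** matrix_inv P) = P ** (D ** (matrix_inv P ** P) ** D') ** matrix_inv P"
    by (simp add: MPD matrix_mul_assoc)
  also have "\<dots> = mat 1"
    by (simp add: matrix_inv_left[OF P] matrix_inv_right[OF P] DD')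
  finally have "matrix_inv M = P ** D' ** matrix_inv P"
    by (rule matrix_inv_eqI)
  then show ?thesis
    using P D' unfolding diagonalizable_mat_def by blast
qed

definition of_real_mat :: "real^'n^'m \<Rightarrow> 'a::real_algebra_1^'n^'m" where
  "of_real_mat M = (\<chi> i j. of_real (M $ i $ j))"

lemma of_real_mat_mult: "of_real_mat (M ** N) = of_real_mat M ** of_real_mat N"
  by (simp add: of_real_mat_def matrix_matrix_mult_def vec_eq_iff of_real_sum)

lemma of_real_mat_one: "of_real_mat (mat 1) = mat 1"
  by (simp add: of_real_mat_def mat_def vec_eq_iff)

lemma complex_mat_eq_of_real_mat: "complex_mat A = of_real_mat (real_mat A)"
  by (simp add: complex_mat_def of_real_mat_def real_mat_def)

lemma of_real_mat_matrix_inv: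
  fixes P :: "real^'n^'n"
  assumes "invertible P"
  shows "matrix_inv (of_real_mat P :: 'a::{field, real_algebra_1}^'n^'n) = of_real_mat (matrix_inv P)"
  by (rule matrix_inv_eqI) (simp add: matrix_inv_right[OF assms] of_real_mat_one flip: of_real_mat_mult)

lemma invertible_of_real_mat:
  fixes P :: "real^'n^'n"
  assumes "invertible P"
  shows "invertible (of_real_mat P :: 'a::{field, real_algebra_1}^'n^'n)"
  using matrix_inv_right[OF assms] invertible_right_inverse
  by (metis of_real_mat_mult of_real_mat_one)

lemma diagonalizable_mat_of_real_mat_conj:
  fixes P X :: "real^'n^'n"
  assumes "invertible P" and "diagonalizable_mat (of_real_mat X :: 'a::{field, real_algebra_1}^'n^'n)"
  shows "diagonalizable_mat (of_real_mat (P ** X ** matrix_inv P) :: 'a^'n^'n)"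
  using diagonalizable_mat_conj[OF invertible_of_real_mat[OF assms(1)] assms(2)]
  by (simp add: of_real_mat_mult of_real_mat_matrix_inv[OF assms(1)])

lemma diagonalizable_over_C_if_conjugate:
  fixes A B :: "int^'n^'n"
  assumes B: "SL_int B" and P: "invertible P" and A: "diagonalizable_over_C A"
    and conj: "real_mat B = P ** real_mat A ** matrix_inv P \<or>
               matrix_inv (real_mat B) = P ** real_mat A ** matrix_inv P"
  shows "diagonalizable_over_C B"
proof -
  have diag: "diagonalizable_mat (of_real_mat (P ** real_mat A ** matrix_inv P) :: complex^'n^'n)"
    using diagonalizable_mat_of_real_mat_conj[OF P] A
    by (simp add: diagonalizable_over_C_iff complex_mat_eq_of_real_mat)
  have invB: "invertible (of_real_mat (real_mat B) :: complex^'n^'n)"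
    by (rule invertible_of_real_mat[OF invertible_real_mat[OF B]])
  from conj show ?thesis
  proof
    assume "real_mat B = P ** real_mat A ** matrix_inv P"
    then show ?thesis
      using diag by (simp add: diagonalizable_over_C_iff complex_mat_eq_of_real_mat)
  next
    assume "matrix_inv (real_mat B) = P ** real_mat A ** matrix_inv P"
    then have "diagonalizable_mat (matrix_inv (of_real_mat (real_mat B) :: complex^'n^'n))"
      using diag by (simp add: of_real_mat_matrix_inv[OF invertible_real_mat[OF B]])
    then have "diagonalizable_mat (matrix_inv (matrix_inv (of_real_mat (real_mat B) :: complex^'n^'n)))"
      by (rule diagonalizable_mat_matrix_inv[OF invertible_matrix_inv[OF invB]])
    then show ?thesis
      using invB by (simp add: diagonalizable_over_C_iff complex_mat_eq_of_real_mat
          matrix_inv_eqI[OF matrix_inv_left[OF invB]])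
  qed
qed

theorem corollary3p3:
  fixes A B :: "int^'n^'n"
  assumes "SL_int A" and "SL_int B"
    and "\<not> has_eigenvalue_one A" and "\<not> has_eigenvalue_one B"
    and "pi1_mapping_torus A \<cong> pi1_mapping_torus B"
    and "diagonalizable_over_C A"
  shows "diagonalizable_over_C B"
proof -
  obtain \<Psi> where "\<Psi> \<in> iso (lattice_sdp A) (lattice_sdp B)"
    using lattice_sdp_iso_if_pi1_iso[OF assms(1,2,5)] by (auto simp: is_iso_def)
  then interpret lattice_sdp_iso A B \<Psi>
    using assms(1,2) by unfold_locales
  obtain P where "invertible P"
    "real_mat B = P ** real_mat A ** matrix_inv P \<or>
     matrix_inv (real_mat B) = P ** real_mat A ** matrix_inv P"
    using real_mat_conjugate[OF assms(3)] by blast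
  then show ?thesis
    using diagonalizable_over_C_if_conjugate[OF assms(2) _ assms(6)] by blast
qed

end
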